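(* Let $\mathcal O$ be a cyclic operad with $\mathcal O[m]$ finite-dimensional for all $m$. For fixed $k$ and $m$, the restriction $M^{k,m}_n\colon \mathcal{OG}_{k,m}\to\mathcal{OG}_{k,m}$ of $M_n$ is an isomorphism for all sufficiently large $n$.
   Context: Work over $\mathbb R$. $\mathcal O$ is a cyclic operad (vector spaces $\mathcal O[m]$, unit $1_{\mathcal O}$, compositions, $\Sigma_{m+1}$-actions on $\mathcal O[m]$). For $m\ge2$ the $\mathcal O$-spiders with $m$ legs form $\mathcal S[m]=(\bigoplus_L\mathcal O[m-1])_{\Sigma_m}$, the sum over labelings $L$ of the legs of an $m$-star by $\{0,\dots,m-1\}$. A graph is a finite 1-dimensional CW complex with half-edge set $H(X)$ and involution $x\mapsto\bar x$ exchanging the two half-edges of each edge. An orientation of $X$ is an ordering of its vertices together with a direction on each edge, up to an even number of vertex transpositions and edge reversals. An $\mathcal O$-graph is an oriented graph without univalent vertices in which each vertex $v$ is colored by an $\mathcal O$-spider whose legs are identified with the half-edges at $v$. $\mathcal{OG}_{k,m}$ is the real vector space spanned by $\mathcal O$-graphs with $k$ vertices and $m$ half-edges, modulo $(\mathbf X,or)=-(\mathbf X,-or)$ and linearity in the spider coloring each vertex. For a pairing $\pi$ of $H(X)$ (a partition into 2-element sets), $X^\pi$ is the graph obtained by cutting all edges and regluing half-edges according to $\pi$; the standard pairing $\{x,\bar x\}$ gives $X$. Orientation of $X^\pi$: the union of the chord diagrams of $\pi$ and of the standard pairing on the vertex set $H(X)$ is a disjoint union $C(\pi)$ of circles; choose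 a representative of the orientation of $X$ whose edge directions (chords from initial to terminal half-edge) are coherent around each circle; each edge of $X^\pi$ inherits the direction induced by these coherent circle orientations, and the vertex order of $X$ is kept. $\mathbf X^\pi$ is the induced $\mathcal O$-graph (same vertex colorings). Let $c(\pi)$ be the number of components of $C(\pi)$. Define $M_n(\mathbf X)=\sum_\pi(2n)^{c(\pi)}\mathbf X^\pi$, the sum over all pairings $\pi$ of $H(X)$; it preserves each $\mathcal{OG}_{k,m}$. *)

theory Defs
  imports "HOL-Analysis.Analysis" "HOL-Combinatorics.Permutations"
begin

text \<open>An element a of Op[m] has legs labelled 0,...,m (0 = output).
  act m s a relabels the legs: the leg labelled j in a is labelled s j in act m s a
  (s a permutation of {0..m}, i.e. of Sigma_{m+1}; a left action).
  ocomp m n i a b = a o_i b (1 <= i <= m) glues leg i of a to leg 0 of b.\<close>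

definition comp_perm :: "nat \<Rightarrow> nat \<Rightarrow> nat \<Rightarrow> (nat \<Rightarrow> nat) \<Rightarrow> (nat \<Rightarrow> nat) \<Rightarrow> nat \<Rightarrow> nat" where
  "comp_perm m n i s t k =
     (let si = s i; pos = (\<lambda>j. if j < si then j else j + n - 1) in
      if k < i then pos (s k)
      else if k < i + n then si - 1 + t (k - i + 1)
      else if k \<le> m + n - 1 then pos (s (k - n + 1))
      else k)"

definition cyc :: "nat \<Rightarrow> nat \<Rightarrow> nat" where
  "cyc m j = (if j = 0 then m else if j \<le> m then j - 1 else j)"

definition cyclic_operad ::
  "(nat \<Rightarrow> 'a::real_vector set) \<Rightarrow> 'a \<Rightarrow> (nat \<Rightarrow> nat \<Rightarrow> nat \<Rightarrow> 'a \<Rightarrow> 'a \<Rightarrow> 'a)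
   \<Rightarrow> (nat \<Rightarrow> (nat \<Rightarrow> nat) \<Rightarrow> 'a \<Rightarrow> 'a) \<Rightarrow> bool" where
  "cyclic_operad Op e ocomp act \<longleftrightarrow>
     (\<forall>m. subspace (Op m)) \<and>
     e \<in> Op 1 \<and>
     \<comment> \<open>Sigma_{m+1} acts linearly on Op[m]\<close>
     (\<forall>m s a. s permutes {0..m} \<and> a \<in> Op m \<longrightarrow> act m s a \<in> Op m) \<and>
     (\<forall>m s a b c. s permutes {0..m} \<and> a \<in> Op m \<and> b \<in> Op m \<longrightarrow>
         act m s (a + b) = act m s a + act m s b \<and> act m s (c *\<^sub>R a) = c *\<^sub>R act m s a) \<and>
     (\<forall>m a. a \<in> Op m \<longrightarrow> act m id a = a) \<and>
     (\<forall>m s t a. s permutes {0..m} \<and> t permutes {0..m} \<and> a \<in> Op m \<longrightarrow>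
         act m (s \<circ> t) a = act m s (act m t a)) \<and>
     \<comment> \<open>bilinear partial compositions\<close>
     (\<forall>m n i a b. 1 \<le> i \<and> i \<le> m \<and> a \<in> Op m \<and> b \<in> Op n \<longrightarrow> ocomp m n i a b \<in> Op (m + n - 1)) \<and>
     (\<forall>m n i a a' b c. 1 \<le> i \<and> i \<le> m \<and> a \<in> Op m \<and> a' \<in> Op m \<and> b \<in> Op n \<longrightarrow>
         ocomp m n i (a + a') b = ocomp m n i a b + ocomp m n i a' b \<and>
         ocomp m n i (c *\<^sub>R a) b = c *\<^sub>R ocomp m n i a b) \<and>
     (\<forall>m n i a b b' c. 1 \<le> i \<and> i \<le> m \<and> a \<in> Op m \<and> b \<in> Op n \<and> b' \<in> Op n \<longrightarrow>
         ocomp m n i a (b + b') = ocomp m n i a b + ocomp m n i a b' \<and>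
         ocomp m n i a (c *\<^sub>R b) = c *\<^sub>R ocomp m n i a b) \<and>
     \<comment> \<open>unit\<close>
     (\<forall>n b. b \<in> Op n \<longrightarrow> ocomp 1 n 1 e b = b) \<and>
     (\<forall>m i a. 1 \<le> i \<and> i \<le> m \<and> a \<in> Op m \<longrightarrow> ocomp m 1 i a e = a) \<and>
     \<comment> \<open>sequential and parallel associativity\<close>
     (\<forall>m n l i j a b c. 1 \<le> i \<and> i \<le> m \<and> 1 \<le> j \<and> j \<le> n \<and> a \<in> Op m \<and> b \<in> Op n \<and> c \<in> Op l \<longrightarrow>
         ocomp (m + n - 1) l (i + j - 1) (ocomp m n i a b) c = ocomp m (n + l - 1) i a (ocomp n l j b c)) \<and>
     (\<forall>m n l i j a b c. 1 \<le> i \<and> i < j \<and> j \<le> m \<and> a \<in> Op m \<and> b \<in> Op n \<and> c \<in> Op l \<longrightarrow>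
         ocomp (m + n - 1) l (j + n - 1) (ocomp m n i a b) c = ocomp (m + l - 1) n i (ocomp m l j a c) b) \<and>
     \<comment> \<open>equivariance for permutations fixing the output leg 0\<close>
     (\<forall>m n i s t a b. 1 \<le> i \<and> i \<le> m \<and> s permutes {0..m} \<and> s 0 = 0 \<and> t permutes {0..n} \<and> t 0 = 0
         \<and> a \<in> Op m \<and> b \<in> Op n \<longrightarrow>
         ocomp m n (s i) (act m s a) (act n t b) = act (m + n - 1) (comp_perm m n i s t) (ocomp m n i a b)) \<and>
     \<comment> \<open>cyclic compatibility\<close>
     act 1 (cyc 1) e = e \<and>
     (\<forall>m n i a b. 2 \<le> i \<and> i \<le> m \<and> a \<in> Op m \<and> b \<in> Op n \<longrightarrow>
         act (m + n - 1) (cyc (m + n - 1)) (ocomp m n i a b) = ocomp m n (i - 1) (act m (cyc m) a) b) \<and>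
     (\<forall>m n a b. 1 \<le> m \<and> 1 \<le> n \<and> a \<in> Op m \<and> b \<in> Op n \<longrightarrow>
         act (m + n - 1) (cyc (m + n - 1)) (ocomp m n 1 a b) = ocomp n m n (act n (cyc n) b) (act m (cyc m) a))"

definition finite_dim_operad :: "(nat \<Rightarrow> 'a::real_vector set) \<Rightarrow> bool" where
  "finite_dim_operad Op \<longleftrightarrow> (\<forall>m. \<exists>B. finite B \<and> Op m \<subseteq> span B)"

text \<open>A representative Op-graph: half-edges {0..<m}, vertices {0..<k};
  gpair = edge involution x |-> xbar, gvtx = vertex of a half-edge,
  gst = set of initial half-edges (edge directions); the vertex order of the
  orientation is the order 0 < 1 < ... < k-1 of the vertex labels;
  glab v = labelling of the legs (half-edges at v) of the spider at v by {0..<val v},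
  gcol v = element of Op[val v - 1]; the spider at v is the class of (glab v, gcol v).
  Outside the relevant domains all data take fixed junk values.\<close>

datatype 'a ograph = OGraph (gpair: "nat \<Rightarrow> nat") (gvtx: "nat \<Rightarrow> nat") (gst: "nat set")
  (glab: "nat \<Rightarrow> nat \<Rightarrow> nat") (gcol: "nat \<Rightarrow> 'a")

definition valence :: "nat \<Rightarrow> 'a ograph \<Rightarrow> nat \<Rightarrow> nat" where
  "valence m g v = card {x. x < m \<and> gvtx g x = v}"

definition is_pairing :: "nat \<Rightarrow> (nat \<Rightarrow> nat) \<Rightarrow> bool" where
  "is_pairing m p \<longleftrightarrow> (\<forall>x<m. p x < m \<and> p x \<noteq> x \<and> p (p x) = x) \<and> (\<forall>x. m \<le> x \<longrightarrow> p x = x)"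

definition valid_ograph :: "(nat \<Rightarrow> 'a::real_vector set) \<Rightarrow> nat \<Rightarrow> nat \<Rightarrow> 'a ograph \<Rightarrow> bool" where
  "valid_ograph Op k m g \<longleftrightarrow>
     is_pairing m (gpair g) \<and>
     (\<forall>x<m. gvtx g x < k) \<and> (\<forall>x. m \<le> x \<longrightarrow> gvtx g x = 0) \<and>
     (\<forall>v<k. 2 \<le> valence m g v) \<and>
     gst g \<subseteq> {..<m} \<and> (\<forall>x<m. x \<in> gst g \<longleftrightarrow> gpair g x \<notin> gst g) \<and>
     (\<forall>v<k. bij_betw (glab g v) {x. x < m \<and> gvtx g x = v} {..<valence m g v}) \<and>
     (\<forall>v x. \<not> (v < k \<and> x < m \<and> gvtx g x = v) \<longrightarrow> glab g v x = 0) \<and>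
     (\<forall>v<k. gcol g v \<in> Op (valence m g v - 1)) \<and> (\<forall>v. k \<le> v \<longrightarrow> gcol g v = 0)"

definition delta :: "'b \<Rightarrow> 'b \<Rightarrow> real" where
  "delta r = (\<lambda>s. if s = r then 1 else 0)"

definition fspan :: "('b \<Rightarrow> real) set \<Rightarrow> ('b \<Rightarrow> real) set" where
  "fspan G = {(\<lambda>s. \<Sum>g\<in>T. c g * g s) | T c. finite T \<and> T \<subseteq> G}"

definition free_og :: "(nat \<Rightarrow> 'a::real_vector set) \<Rightarrow> nat \<Rightarrow> nat \<Rightarrow> ('a ograph \<Rightarrow> real) set" where
  "free_og Op k m = {f. finite {g. f g \<noteq> 0} \<and> (\<forall>g. f g \<noteq> 0 \<longrightarrow> valid_ograph Op k m g)}"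

definition flip_edge :: "'a ograph \<Rightarrow> nat \<Rightarrow> 'a ograph" where
  "flip_edge g x = OGraph (gpair g) (gvtx g)
      ((gst g - {x, gpair g x}) \<union> ({x, gpair g x} - gst g)) (glab g) (gcol g)"

definition transport :: "nat \<Rightarrow> nat \<Rightarrow> (nat \<Rightarrow> nat) \<Rightarrow> (nat \<Rightarrow> nat) \<Rightarrow> 'a ograph \<Rightarrow> 'a ograph" where
  "transport k m t r g = OGraph
      (t \<circ> gpair g \<circ> inv t)
      (\<lambda>x. if x < m then r (gvtx g (inv t x)) else 0)
      (t ` gst g)
      (\<lambda>v x. if v < k \<and> x < m then glab g (inv r v) (inv t x) else 0)
      (\<lambda>v. gcol g (inv r v))"

definition relabel_spider :: "(nat \<Rightarrow> (nat \<Rightarrow> nat) \<Rightarrow> 'a \<Rightarrow> 'a) \<Rightarrow> nat \<Rightarrow> 'a ograph \<Rightarrow> nat \<Rightarrow> (nat \<Rightarrow> nat) \<Rightarrow> 'a ograph" where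
  "relabel_spider act m g v p = OGraph (gpair g) (gvtx g) (gst g)
      ((glab g)(v := (\<lambda>x. if x < m \<and> gvtx g x = v then p (glab g v x) else 0)))
      ((gcol g)(v := act (valence m g v - 1) p (gcol g v)))"

definition set_color :: "'a ograph \<Rightarrow> nat \<Rightarrow> 'a \<Rightarrow> 'a ograph" where
  "set_color g v a = OGraph (gpair g) (gvtx g) (gst g) (glab g) ((gcol g)(v := a))"

text \<open>Relations: orientation reversal, isomorphism (with the sign of the vertex
  permutation, as the vertex order is part of the orientation), spider coinvariants,
  and linearity in the spider at each vertex.\<close>
definition og_relations ::
  "(nat \<Rightarrow> 'a::real_vector set) \<Rightarrow> (nat \<Rightarrow> (nat \<Rightarrow> nat) \<Rightarrow> 'a \<Rightarrow> 'a) \<Rightarrow> nat \<Rightarrow> nat \<Rightarrow> ('a ograph \<Rightarrow> real) set" where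
  "og_relations Op act k m =
     {(\<lambda>s. delta g s + delta (flip_edge g x) s) | g x. valid_ograph Op k m g \<and> x < m}
   \<union> {(\<lambda>s. delta g s - real_of_int (sign r) * delta (transport k m t r g) s) | g t r.
        valid_ograph Op k m g \<and> t permutes {..<m} \<and> r permutes {..<k}}
   \<union> {(\<lambda>s. delta g s - delta (relabel_spider act m g v p) s) | g v p.
        valid_ograph Op k m g \<and> v < k \<and> p permutes {..<valence m g v}}
   \<union> {(\<lambda>s. delta (set_color g v (c *\<^sub>R a + d *\<^sub>R b)) s - c * delta (set_color g v a) s
           - d * delta (set_color g v b) s) | g v a b c d.
        valid_ograph Op k m g \<and> v < k \<and> a \<in> Op (valence m g v - 1) \<and> b \<in> Op (valence m g v - 1)}"

text \<open>The relation subspace; OG_{k,m} = free_og Op k m / og_rel Op act k m.\<close>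
definition og_rel ::
  "(nat \<Rightarrow> 'a::real_vector set) \<Rightarrow> (nat \<Rightarrow> (nat \<Rightarrow> nat) \<Rightarrow> 'a \<Rightarrow> 'a) \<Rightarrow> nat \<Rightarrow> nat \<Rightarrow> ('a ograph \<Rightarrow> real) set" where
  "og_rel Op act k m = fspan (og_relations Op act k m)"

definition num_circles :: "nat \<Rightarrow> (nat \<Rightarrow> nat) \<Rightarrow> (nat \<Rightarrow> nat) \<Rightarrow> nat" where
  "num_circles m q p =
     (let E = {(x, q x) | x. x < m} \<union> {(x, p x) | x. x < m}
      in card ((\<lambda>x. {y. (x, y) \<in> E\<^sup>*}) ` {..<m}))"

text \<open>A representative of the orientation whose edge directions (set of initial half-edges)
  are coherent around every circle of C(p): along each circle one goes from an initial
  to a terminal half-edge along an edge of X and from a terminal half-edge t to p t,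
  which must be initial.\<close>
definition coherent_dirs :: "nat \<Rightarrow> 'a ograph \<Rightarrow> (nat \<Rightarrow> nat) \<Rightarrow> nat set" where
  "coherent_dirs m g p = (SOME S. S \<subseteq> {..<m} \<and> (\<forall>x<m. x \<in> S \<longleftrightarrow> gpair g x \<notin> S)
                                  \<and> (\<forall>x<m. p x \<in> S \<longleftrightarrow> x \<notin> S))"

text \<open>X^p with the induced orientation, and the sign relating the chosen coherent
  representative to the given one (one factor -1 per reversed edge).\<close>
definition regluing :: "nat \<Rightarrow> 'a ograph \<Rightarrow> (nat \<Rightarrow> nat) \<Rightarrow> 'a ograph" where
  "regluing m g p = OGraph p (gvtx g) ({..<m} - coherent_dirs m g p) (glab g) (gcol g)"

definition regluing_sign :: "nat \<Rightarrow> 'a ograph \<Rightarrow> (nat \<Rightarrow> nat) \<Rightarrow> real" where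
  "regluing_sign m g p = (-1) ^ card (gst g - coherent_dirs m g p)"

definition M_gen :: "nat \<Rightarrow> nat \<Rightarrow> 'a ograph \<Rightarrow> 'a ograph \<Rightarrow> real" where
  "M_gen n m g = (\<lambda>s. \<Sum>p\<in>{p. is_pairing m p}.
       (2 * real n) ^ num_circles m (gpair g) p * regluing_sign m g p * delta (regluing m g p) s)"

definition M_op :: "nat \<Rightarrow> nat \<Rightarrow> ('a ograph \<Rightarrow> real) \<Rightarrow> 'a ograph \<Rightarrow> real" where
  "M_op n m f = (\<lambda>s. \<Sum>g\<in>{g. f g \<noteq> 0}. f g * M_gen n m g s)"

definition induces_iso_on_quotient ::
  "('b \<Rightarrow> real) set \<Rightarrow> ('b \<Rightarrow> real) set \<Rightarrow> (('b \<Rightarrow> real) \<Rightarrow> ('b \<Rightarrow> real)) \<Rightarrow> bool" where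
  "induces_iso_on_quotient V W L \<longleftrightarrow>
     (\<forall>f\<in>V. L f \<in> V) \<and> (\<forall>f\<in>W. L f \<in> W) \<and>
     (\<forall>f\<in>V. L f \<in> W \<longrightarrow> f \<in> W) \<and>
     (\<forall>h\<in>V. \<exists>f\<in>V. (\<lambda>s. L f s - h s) \<in> W)"

end

(* M_n never changes vertex data. For a graph g, the graphs obtained from g by choosing another
   pairing of the half-edges and other edge directions span a block preserved by M_n, on which
   M_n acts by one finite matrix, the same for all g. Modulo reversal of edges a block is spanned
   by one graph per pairing q, and there M_n has the entries +-(2n)^c(q,p); since
   c(q,p) < c(p,p) = m/2 for q ~= p, this matrix is diagonally dominant as soon as 2n exceeds the
   number of pairings, so M_n is injective on blocks modulo reversals. Dividing an annihilating
   polynomial of the block matrix by its lowest term gives a polynomial P with M_n P(M_n) = 1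
   modulo reversals. Being a polynomial in M_n, which preserves all relations of OG_{k,m},
   P(M_n) inverts M_n on the quotient. Neither the operad axioms nor the finite dimensionality
   of O enter the argument. *)

theory Submission
  imports Defs "HOL-Library.Function_Algebras"
begin

section \<open>Finitely supported real functions\<close>

global_interpretation fun_vec: vector_space "\<lambda>(c::real) (f::'b \<Rightarrow> real) x. c * f x"
  by unfold_locales (simp_all add: fun_eq_iff algebra_simps)

lemma sum_fun_eq_lambda: "(\<Sum>a\<in>A. f a) = (\<lambda>x. \<Sum>a\<in>A. f a x)"
  by (induction A rule: infinite_finite_induct) (simp_all add: fun_eq_iff)

lemma subspace_add_fun: "fun_vec.subspace S \<Longrightarrow> f \<in> S \<Longrightarrow> h \<in> S \<Longrightarrow> (\<lambda>x. f x + h x) \<in> S"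
  using fun_vec.subspace_add[of S f h] by (simp add: plus_fun_def)

lemma subspace_diff_fun: "fun_vec.subspace S \<Longrightarrow> f \<in> S \<Longrightarrow> h \<in> S \<Longrightarrow> (\<lambda>x. f x - h x) \<in> S"
  using fun_vec.subspace_diff[of S f h] by (simp add: fun_diff_def)

lemma subspace_sum_fun:
  assumes "fun_vec.subspace S" "\<And>i. i \<in> A \<Longrightarrow> F i \<in> S"
  shows "(\<lambda>x. \<Sum>i\<in>A. c i * F i x) \<in> S"
  using fun_vec.subspace_sum[OF assms(1), of A "\<lambda>i x. c i * F i x"] assms
  by (simp add: fun_vec.subspace_scale sum_fun_eq_lambda)

lemma fspan_eq_span: "fspan G = fun_vec.span G"
  unfolding fspan_def fun_vec.span_explicit by (simp add: sum_fun_eq_lambda)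

lemma sum_mult_delta: "finite A \<Longrightarrow> (\<Sum>g\<in>A. c g * delta g s) = (if s \<in> A then c s else 0)"
  unfolding delta_def by (simp add: if_distrib[of "\<lambda>t. _ * t"] sum.delta' cong: if_cong)

definition finite_supp :: "('b \<Rightarrow> real) \<Rightarrow> bool" where
  "finite_supp f \<longleftrightarrow> finite {x. f x \<noteq> 0}"

lemma subspace_finite_supp: "fun_vec.subspace {f. finite_supp f}"
proof -
  have "finite {x. f x + h x \<noteq> 0}" if "finite {x. f x \<noteq> 0}" "finite {x. h x \<noteq> 0}"
    for f h :: "'b \<Rightarrow> real"
    by (rule rev_finite_subset[OF finite_UnI[OF that]]) auto
  moreover have "finite {x. c * f x \<noteq> 0}" if "finite {x. f x \<noteq> 0}" for c and f :: "'b \<Rightarrow> real"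
    by (rule rev_finite_subset[OF that]) auto
  ultimately show ?thesis by (auto simp: fun_vec.subspace_def finite_supp_def)
qed

lemma finite_supp_delta: "finite_supp (delta g)"
  unfolding finite_supp_def delta_def by simp

lemma finite_supp_scale: "finite_supp f \<Longrightarrow> finite_supp (\<lambda>x. c * f x)"
  using fun_vec.subspace_scale[OF subspace_finite_supp, of f c] by simp

lemma finite_supp_diff: "finite_supp f \<Longrightarrow> finite_supp h \<Longrightarrow> finite_supp (\<lambda>x. f x - h x)"
  using subspace_diff_fun[OF subspace_finite_supp, of f h] by simp

lemma finite_supp_sum:
  "(\<And>i. i \<in> A \<Longrightarrow> finite_supp (F i)) \<Longrightarrow> finite_supp (\<lambda>x. \<Sum>i\<in>A. c i * F i x)"
  using subspace_sum_fun[OF subspace_finite_supp, of A F c] by simp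

lemma finite_supp_expand: "finite_supp f \<Longrightarrow> f = (\<lambda>s. \<Sum>g | f g \<noteq> 0. f g * delta g s)"
  unfolding finite_supp_def by (auto simp: fun_eq_iff sum_mult_delta)

definition supported_on :: "'b set \<Rightarrow> ('b \<Rightarrow> real) set" where
  "supported_on X = {v. \<forall>x. x \<notin> X \<longrightarrow> v x = 0}"

lemma subspace_supported_on: "fun_vec.subspace (supported_on X)"
  by (auto simp: fun_vec.subspace_def supported_on_def)

lemma delta_supported_on: "i \<in> X \<Longrightarrow> delta i \<in> supported_on X"
  by (auto simp: supported_on_def delta_def)

lemma supported_on_expand: "finite X \<Longrightarrow> v \<in> supported_on X \<Longrightarrow> v = (\<lambda>x. \<Sum>i\<in>X. v i * delta i x)"
  by (auto simp: fun_eq_iff supported_on_def sum_mult_delta)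

lemma finite_supp_supported_on: "finite X \<Longrightarrow> v \<in> supported_on X \<Longrightarrow> finite_supp v"
  unfolding finite_supp_def supported_on_def by (auto intro: rev_finite_subset)

definition linear_on_finite_supp :: "(('b \<Rightarrow> real) \<Rightarrow> ('c \<Rightarrow> real)) \<Rightarrow> bool" where
  "linear_on_finite_supp T \<longleftrightarrow>
     (\<forall>f. finite_supp f \<longrightarrow> finite_supp (T f)) \<and>
     (\<forall>f h. finite_supp f \<longrightarrow> finite_supp h \<longrightarrow> T (\<lambda>x. f x + h x) = (\<lambda>x. T f x + T h x)) \<and>
     (\<forall>c f. finite_supp f \<longrightarrow> T (\<lambda>x. c * f x) = (\<lambda>x. c * T f x))"

context
  fixes T :: "('b \<Rightarrow> real) \<Rightarrow> ('c \<Rightarrow> real)"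
  assumes T: "linear_on_finite_supp T"
begin

lemma linear_on_finite_supp_finite_supp: "finite_supp f \<Longrightarrow> finite_supp (T f)"
  using T unfolding linear_on_finite_supp_def by blast

lemma linear_on_finite_supp_add:
  "finite_supp f \<Longrightarrow> finite_supp h \<Longrightarrow> T (\<lambda>x. f x + h x) = (\<lambda>x. T f x + T h x)"
  using T unfolding linear_on_finite_supp_def by blast

lemma linear_on_finite_supp_scale: "finite_supp f \<Longrightarrow> T (\<lambda>x. c * f x) = (\<lambda>x. c * T f x)"
  using T unfolding linear_on_finite_supp_def by blast

lemma linear_on_finite_supp_zero: "T (\<lambda>x. 0) = (\<lambda>x. 0)"
  using linear_on_finite_supp_scale[of "\<lambda>x. 0" 0] by (simp add: finite_supp_def)

lemma linear_on_finite_supp_diff: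
  assumes "finite_supp f" "finite_supp h"
  shows "T (\<lambda>x. f x - h x) = (\<lambda>x. T f x - T h x)"
proof -
  have "finite_supp (\<lambda>x. (-1) * h x)"
    using fun_vec.subspace_scale[OF subspace_finite_supp, of h "-1"] assms(2) by (simp only: mem_Collect_eq)
  then have "T (\<lambda>x. f x + (-1) * h x) = (\<lambda>x. T f x + T (\<lambda>x. (-1) * h x) x)"
    by (rule linear_on_finite_supp_add[OF assms(1)])
  also have "T (\<lambda>x. (-1) * h x) = (\<lambda>x. (-1) * T h x)"
    by (rule linear_on_finite_supp_scale[OF assms(2)])
  finally show ?thesis by simp
qed

lemma linear_on_finite_supp_sum:
  assumes "\<And>i. i \<in> A \<Longrightarrow> finite_supp (F i)"
  shows "T (\<lambda>x. \<Sum>i\<in>A. c i * F i x) = (\<lambda>x. \<Sum>i\<in>A. c i * T (F i) x)"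
  using assms
proof (induction A rule: infinite_finite_induct)
  case (insert a A)
  have "(\<lambda>x. \<Sum>i\<in>A. c i * F i x) \<in> {f. finite_supp f}"
    by (rule subspace_sum_fun[OF subspace_finite_supp]) (use insert.prems in auto)
  moreover have "(\<lambda>x. c a * F a x) \<in> {f. finite_supp f}"
    using fun_vec.subspace_scale[OF subspace_finite_supp, of "F a" "c a"] insert.prems by simp
  ultimately have "T (\<lambda>x. c a * F a x + (\<Sum>i\<in>A. c i * F i x))
      = (\<lambda>x. c a * T (F a) x + T (\<lambda>x. \<Sum>i\<in>A. c i * F i x) x)"
    using insert.prems by (simp add: linear_on_finite_supp_add linear_on_finite_supp_scale)
  then show ?case
    using insert by simp
qed (simp_all add: linear_on_finite_supp_zero)

end

lemma linear_on_finite_supp_funpow: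
  fixes T :: "('b \<Rightarrow> real) \<Rightarrow> ('b \<Rightarrow> real)"
  assumes "linear_on_finite_supp T"
  shows "linear_on_finite_supp (T ^^ j)"
  by (induction j) (use assms in \<open>auto simp: linear_on_finite_supp_def\<close>)

definition poly_op :: "(nat \<Rightarrow> real) \<Rightarrow> nat \<Rightarrow> (('b \<Rightarrow> real) \<Rightarrow> ('b \<Rightarrow> real)) \<Rightarrow> ('b \<Rightarrow> real) \<Rightarrow> 'b \<Rightarrow> real" where
  "poly_op c d T f = (\<lambda>x. \<Sum>j<d. c j * (T ^^ j) f x)"

lemma linear_on_finite_supp_comp:
  assumes "linear_on_finite_supp T1" "linear_on_finite_supp T2"
  shows "linear_on_finite_supp (\<lambda>f. T1 (T2 f))"
  using assms unfolding linear_on_finite_supp_def by simp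

lemma linear_on_finite_supp_poly_op:
  fixes T :: "('b \<Rightarrow> real) \<Rightarrow> ('b \<Rightarrow> real)"
  assumes T: "linear_on_finite_supp T"
  shows "linear_on_finite_supp (poly_op c d T)"
proof -
  note pow = linear_on_finite_supp_funpow[OF T]
  have "finite_supp (poly_op c d T f)" if "finite_supp f" for f
    unfolding poly_op_def by (rule finite_supp_sum) (rule linear_on_finite_supp_finite_supp[OF pow that])
  moreover have "poly_op c d T (\<lambda>x. f x + h x) = (\<lambda>x. poly_op c d T f x + poly_op c d T h x)"
    if "finite_supp f" "finite_supp h" for f h
    using that by (simp add: poly_op_def linear_on_finite_supp_add[OF pow] distrib_left sum.distrib)
  moreover have "poly_op c d T (\<lambda>x. a * f x) = (\<lambda>x. a * poly_op c d T f x)" if "finite_supp f" for a f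
    using that by (simp add: poly_op_def linear_on_finite_supp_scale[OF pow] sum_distrib_left mult_ac)
  ultimately show ?thesis unfolding linear_on_finite_supp_def by blast
qed

lemma poly_op_in_subspace:
  assumes "fun_vec.subspace S" "\<And>f. f \<in> S \<Longrightarrow> T f \<in> S" "f \<in> S"
  shows "poly_op c d T f \<in> S"
proof -
  have "(T ^^ j) f \<in> S" for j by (induction j) (simp_all add: assms)
  then show ?thesis unfolding poly_op_def by (intro subspace_sum_fun[OF assms(1)])
qed

lemma poly_op_commute:
  assumes T: "linear_on_finite_supp T" and f: "finite_supp f"
  shows "T (poly_op c d T f) = poly_op c d T (T f)"
proof -
  have "finite_supp ((T ^^ j) f)" for j
    using linear_on_finite_supp_finite_supp[OF linear_on_finite_supp_funpow[OF T] f] .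
  then show ?thesis
    unfolding poly_op_def by (simp add: linear_on_finite_supp_sum[OF T] funpow_swap1)
qed

lemma induces_iso_on_quotient_if_poly_right_inverse:
  assumes L: "linear_on_finite_supp L"
    and V: "fun_vec.subspace V" "V \<subseteq> {f. finite_supp f}" and W: "fun_vec.subspace W"
    and LV: "\<And>f. f \<in> V \<Longrightarrow> L f \<in> V" and LW: "\<And>f. f \<in> W \<Longrightarrow> L f \<in> W"
    and inv: "\<And>f. f \<in> V \<Longrightarrow> (\<lambda>x. L (poly_op c d L f) x - f x) \<in> W"
  shows "induces_iso_on_quotient V W L"
  unfolding induces_iso_on_quotient_def
proof (intro conjI ballI impI)
  fix f assume f: "f \<in> V" and Lf: "L f \<in> W"
  have "poly_op c d L (L f) \<in> W" by (rule poly_op_in_subspace[OF W LW Lf])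
  then have "L (poly_op c d L f) \<in> W" using poly_op_commute[OF L] f V(2) by auto
  from subspace_diff_fun[OF W this inv[OF f]] show "f \<in> W" by simp
next
  fix h assume h: "h \<in> V"
  have "poly_op c d L h \<in> V" by (rule poly_op_in_subspace[OF V(1)]) (simp_all add: LV h)
  with inv[OF h] show "\<exists>f\<in>V. (\<lambda>x. L f x - h x) \<in> W" by blast
qed (fact LV, fact LW)

lemma vanishing_combination_if_dependent:
  fixes M :: "nat \<Rightarrow> 'b \<Rightarrow> real"
  assumes J: "finite J" and inj: "inj_on M J" and dep: "fun_vec.dependent (M ` J)"
  shows "\<exists>c. (\<exists>j\<in>J. c j \<noteq> 0) \<and> (\<forall>y. (\<Sum>j\<in>J. c j * M j y) = 0)"
proof -
  obtain t u where t: "finite t" "t \<subseteq> M ` J" "(\<Sum>v\<in>t. (\<lambda>x. u v * v x)) = 0" and nz: "\<exists>v\<in>t. u v \<noteq> 0"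
    using dep unfolding fun_vec.dependent_explicit by blast
  define I where "I = {j \<in> J. M j \<in> t}"
  have tI: "t = M ` I" unfolding I_def using t(2) by auto
  have injI: "inj_on M I" using inj unfolding I_def by (rule inj_on_subset) auto
  define c where "c j = (if j \<in> I then u (M j) else 0)" for j
  have "(\<Sum>j\<in>J. c j * M j y) = 0" for y
  proof -
    have "(\<Sum>j\<in>J. c j * M j y) = (\<Sum>j\<in>I. u (M j) * M j y)"
      by (rule sum.mono_neutral_cong_right[OF J]) (auto simp: I_def c_def)
    also have "\<dots> = (\<Sum>v\<in>t. u v * v y)" unfolding tI by (simp add: sum.reindex[OF injI])
    also have "\<dots> = 0" using fun_cong[OF t(3), of y] by (simp add: sum_fun_eq_lambda)
    finally show ?thesis .
  qed
  moreover obtain v where "v \<in> t" "u v \<noteq> 0" using nz by blast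
  then obtain j where "j \<in> I" "u (M j) \<noteq> 0" unfolding tI by blast
  then have "j \<in> J" "c j \<noteq> 0" unfolding c_def I_def by auto
  ultimately show ?thesis by blast
qed

lemma exists_vanishing_combination:
  fixes M :: "nat \<Rightarrow> 'b \<Rightarrow> real"
  assumes Y: "finite Y" "card Y \<le> K" and M: "\<And>j y. j \<le> K \<Longrightarrow> y \<notin> Y \<Longrightarrow> M j y = 0"
  shows "\<exists>c. (\<exists>j\<le>K. c j \<noteq> 0) \<and> (\<forall>y. (\<Sum>j\<le>K. c j * M j y) = 0)"
proof (cases "inj_on M {..K}")
  case False
  then obtain a b where ab: "a \<le> K" "b \<le> K" "a \<noteq> b" "M a = M b" unfolding inj_on_def by auto
  define c where "c j = (if j = a then 1 else if j = b then -1 else (0::real))" for j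
  have "(\<Sum>j\<le>K. c j * M j y) = (\<Sum>j\<in>{a, b}. c j * M j y)" for y
    by (rule sum.mono_neutral_right) (use ab in \<open>auto simp: c_def\<close>)
  then have "\<forall>y. (\<Sum>j\<le>K. c j * M j y) = 0" using ab by (simp add: c_def)
  moreover have "c a \<noteq> 0" unfolding c_def by simp
  ultimately show ?thesis using ab(1) by blast
next
  case True
  \<comment> \<open>K + 1 distinct functions in the span of the card Y \<le> K point masses at Y\<close>
  have "M j \<in> fun_vec.span (delta ` Y)" if "j \<le> K" for j
  proof -
    have "M j \<in> supported_on Y" using M that by (auto simp: supported_on_def)
    then have "M j = (\<Sum>i\<in>Y. (\<lambda>x. M j i * delta i x))"
      unfolding sum_fun_eq_lambda by (rule supported_on_expand[OF Y(1)])
    also have "\<dots> \<in> fun_vec.span (delta ` Y)"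
      by (intro fun_vec.span_sum fun_vec.span_scale fun_vec.span_base) auto
    finally show ?thesis .
  qed
  then have span: "M ` {..K} \<subseteq> fun_vec.span (delta ` Y)" by blast
  have "fun_vec.dependent (M ` {..K})"
  proof (rule ccontr)
    assume "fun_vec.independent (M ` {..K})"
    from fun_vec.independent_span_bound[OF finite_imageI[OF Y(1)] this span]
    have "card (M ` {..K}) \<le> card (delta ` Y)" by blast
    moreover have "card (M ` {..K}) = K + 1" using card_image[OF True] by simp
    moreover have "card (delta ` Y) \<le> K" using card_image_le[OF Y(1), of delta] Y(2) by linarith
    ultimately show False by linarith
  qed
  then obtain c where "\<exists>j\<in>{..K}. c j \<noteq> 0" "\<forall>y. (\<Sum>j\<le>K. c j * M j y) = 0"
    using vanishing_combination_if_dependent[OF finite_atMost True] by blast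
  then show ?thesis by auto
qed

lemma funpow_supported_on:
  "(\<And>v. v \<in> supported_on X \<Longrightarrow> T v \<in> supported_on X) \<Longrightarrow> v \<in> supported_on X \<Longrightarrow> (T ^^ j) v \<in> supported_on X"
  by (induction j) simp_all

lemma exists_annihilating_poly:
  assumes T: "linear_on_finite_supp T" and X: "finite X"
    and TX: "\<And>v. v \<in> supported_on X \<Longrightarrow> T v \<in> supported_on X"
  shows "\<exists>c d. (\<exists>j<d. c j \<noteq> 0) \<and> (\<forall>v\<in>supported_on X. poly_op c d T v = (\<lambda>x. 0))"
proof -
  \<comment> \<open>the matrices of the powers T^j on the finite-dimensional space of functions supported on X\<close>
  define M where "M j = (\<lambda>(i, i'). if i \<in> X then (T ^^ j) (delta i) i' else 0)" for j
  define K where "K = card (X \<times> X)"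
  have "(T ^^ j) (delta i) \<in> supported_on X" if "i \<in> X" for i j
    by (rule funpow_supported_on) (simp_all add: TX delta_supported_on that)
  then have "M j y = 0" if "y \<notin> X \<times> X" for j y
    using that by (auto simp: M_def supported_on_def split: prod.splits)
  then obtain c where c: "\<exists>j\<le>K. c j \<noteq> 0" "\<And>y. (\<Sum>j\<le>K. c j * M j y) = 0"
    using exists_vanishing_combination[of "X \<times> X" K M] X unfolding K_def by auto
  have "poly_op c (Suc K) T v = (\<lambda>x. 0)" if v: "v \<in> supported_on X" for v
  proof
    fix x
    have "(T ^^ j) v = (T ^^ j) (\<lambda>x. \<Sum>i\<in>X. v i * delta i x)" for j
      using arg_cong[OF supported_on_expand[OF X v]] .
    then have "(T ^^ j) v x = (\<Sum>i\<in>X. v i * M j (i, x))" for j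
      using linear_on_finite_supp_sum[OF linear_on_finite_supp_funpow[OF T], of X delta]
      by (simp add: finite_supp_delta M_def)
    then have "poly_op c (Suc K) T v x = (\<Sum>i\<in>X. v i * (\<Sum>j\<le>K. c j * M j (i, x)))"
      unfolding poly_op_def lessThan_Suc_atMost
      by (simp add: sum_distrib_left sum.swap[of _ "{..K}" X] mult_ac)
    then show "poly_op c (Suc K) T v x = 0" using c(2) by simp
  qed
  moreover from c(1) have "\<exists>j<Suc K. c j \<noteq> 0" by (auto simp: less_Suc_eq_le)
  ultimately show ?thesis by blast
qed

lemma in_subspace_if_funpow_in_subspace:
  assumes TX: "\<And>v. v \<in> supported_on X \<Longrightarrow> T v \<in> supported_on X"
    and inj: "\<And>v. v \<in> supported_on X \<Longrightarrow> T v \<in> U \<Longrightarrow> v \<in> U"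
  shows "w \<in> supported_on X \<Longrightarrow> (T ^^ j) w \<in> U \<Longrightarrow> w \<in> U"
proof (induction j arbitrary: w)
  case (Suc j)
  then have "(T ^^ j) (T w) \<in> U" by (simp add: funpow_swap1)
  then have "T w \<in> U" using Suc.IH TX[OF Suc.prems(1)] by blast
  then show ?case using Suc.prems(1) by (rule inj[rotated])
qed simp

lemma funpow_poly_op_shift:
  assumes T: "linear_on_finite_supp T" and v: "\<And>j. finite_supp ((T ^^ j) v)"
    and below: "\<And>j. j < a \<Longrightarrow> c j = 0" and ad: "a \<le> d"
  shows "(T ^^ a) (poly_op (\<lambda>i. c (a + i)) (d - a) T v) = poly_op c d T v"
proof -
  have "(T ^^ a) (poly_op (\<lambda>i. c (a + i)) (d - a) T v) = (\<lambda>x. \<Sum>i<d - a. c (a + i) * (T ^^ (a + i)) v x)"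
    unfolding poly_op_def
    by (simp add: linear_on_finite_supp_sum[OF linear_on_finite_supp_funpow[OF T]] v funpow_add)
  moreover have "(\<Sum>i<d - a. c (a + i) * (T ^^ (a + i)) v x) = (\<Sum>j\<in>{a..<d}. c j * (T ^^ j) v x)" for x
    using sum.shift_bounds_nat_ivl[of "\<lambda>j. c j * (T ^^ j) v x" 0 a "d - a"] ad
    by (simp add: lessThan_atLeast0 add.commute)
  moreover have "(\<Sum>j<d. c j * (T ^^ j) v x) = (\<Sum>j\<in>{a..<d}. c j * (T ^^ j) v x)" for x
    using sum.atLeastLessThan_concat[of 0 a d "\<lambda>j. c j * (T ^^ j) v x"] ad below
    by (simp add: lessThan_atLeast0)
  ultimately show ?thesis unfolding poly_op_def by simp
qed

lemma exists_poly_right_inverse_mod_subspace: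
  assumes T: "linear_on_finite_supp T" and X: "finite X"
    and TX: "\<And>v. v \<in> supported_on X \<Longrightarrow> T v \<in> supported_on X"
    and U: "fun_vec.subspace U"
    and inj: "\<And>v. v \<in> supported_on X \<Longrightarrow> T v \<in> U \<Longrightarrow> v \<in> U"
  shows "\<exists>r e. \<forall>v\<in>supported_on X. (\<lambda>x. T (poly_op r e T v) x - v x) \<in> U"
proof -
  obtain c d where nz: "\<exists>j<d. c j \<noteq> 0" and ann: "\<forall>v\<in>supported_on X. poly_op c d T v = (\<lambda>x. 0)"
    using exists_annihilating_poly[OF T X TX] by blast
  define a where "a = (LEAST j. c j \<noteq> 0)"
  obtain j0 where j0: "j0 < d" "c j0 \<noteq> 0" using nz by blast
  have ca: "c a \<noteq> 0" unfolding a_def by (rule LeastI[of "\<lambda>j. c j \<noteq> 0", OF j0(2)])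
  have below: "c j = 0" if "j < a" for j using not_less_Least[OF that[unfolded a_def]] by simp
  have ad: "a < d" using Least_le[of "\<lambda>j. c j \<noteq> 0", OF j0(2)] j0(1) unfolding a_def by simp
  define e where "e = d - Suc a"
  define r where "r i = - c (Suc a + i) / c a" for i
  have pow_X: "(T ^^ j) v \<in> supported_on X" if "v \<in> supported_on X" for j v
    by (rule funpow_supported_on) (simp_all add: TX that)
  have "(\<lambda>x. T (poly_op r e T v) x - v x) \<in> U" if v: "v \<in> supported_on X" for v
  proof -
    have fs: "finite_supp ((T ^^ j) v)" for j by (rule finite_supp_supported_on[OF X pow_X[OF v]])
    \<comment> \<open>the truncation w of the annihilating polynomial below its lowest term is killed by T^a\<close>
    define w where "w = poly_op (\<lambda>i. c (a + i)) (d - a) T v"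
    have "(T ^^ a) w = poly_op c d T v"
      unfolding w_def by (rule funpow_poly_op_shift[OF T fs]) (simp_all add: below less_imp_le[OF ad])
    then have "(T ^^ a) w \<in> U" using ann v fun_vec.subspace_0[OF U] by (simp add: zero_fun_def)
    moreover have "w \<in> supported_on X"
      unfolding w_def by (rule poly_op_in_subspace[OF subspace_supported_on]) (simp_all add: TX v)
    ultimately have "w \<in> U" using in_subspace_if_funpow_in_subspace[of X T U] TX inj by blast
    moreover have "(\<lambda>x. T (poly_op r e T v) x - v x) = (\<lambda>x. (- 1 / c a) * w x)"
    proof
      fix x
      have "T (poly_op r e T v) x = (\<Sum>i<e. r i * T ((T ^^ i) v) x)"
        unfolding poly_op_def by (simp add: linear_on_finite_supp_sum[OF T] fs)
      then have "c a * T (poly_op r e T v) x = - (\<Sum>i<e. c (Suc a + i) * T ((T ^^ i) v) x)"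
        using ca by (simp add: r_def sum_distrib_left sum_negf)
      moreover have "d - a = Suc e" using ad unfolding e_def by simp
      then have "w x = c a * v x + (\<Sum>i<e. c (Suc a + i) * T ((T ^^ i) v) x)"
        unfolding w_def poly_op_def by (simp add: sum.lessThan_Suc_shift del: sum.lessThan_Suc)
      ultimately show "T (poly_op r e T v) x - v x = (- 1 / c a) * w x"
        using ca by (simp add: field_simps)
    qed
    ultimately show ?thesis using fun_vec.subspace_scale[OF U, of w "- 1 / c a"] by (simp only:)
  qed
  then show ?thesis by blast
qed

lemma diagonally_dominant_kernel_trivial:
  fixes A :: "'p \<Rightarrow> 'p \<Rightarrow> real"
  assumes P: "finite P"
    and dominant: "\<And>p. p \<in> P \<Longrightarrow> (\<Sum>q\<in>P - {p}. \<bar>A q p\<bar>) < \<bar>A p p\<bar>"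
    and kernel: "\<And>p. p \<in> P \<Longrightarrow> (\<Sum>q\<in>P. A q p * w q) = 0"
    and q0: "q0 \<in> P"
  shows "w q0 = 0"
proof (rule ccontr)
  assume nz: "w q0 \<noteq> 0"
  define M where "M = Max ((\<lambda>q. \<bar>w q\<bar>) ` P)"
  have "M \<in> (\<lambda>q. \<bar>w q\<bar>) ` P" unfolding M_def using P q0 by (intro Max_in) auto
  then obtain p where p: "p \<in> P" "\<bar>w p\<bar> = M" by auto
  have le: "\<bar>w q\<bar> \<le> \<bar>w p\<bar>" if "q \<in> P" for q unfolding p(2) M_def using P that by simp
  have "A p p * w p = - (\<Sum>q\<in>P - {p}. A q p * w q)"
    using kernel[OF p(1)] sum.remove[OF P p(1), of "\<lambda>q. A q p * w q"] by simp
  then have "\<bar>A p p\<bar> * \<bar>w p\<bar> = \<bar>\<Sum>q\<in>P - {p}. A q p * w q\<bar>"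
    by (metis abs_minus_cancel abs_mult)
  also have "\<dots> \<le> (\<Sum>q\<in>P - {p}. \<bar>A q p\<bar> * \<bar>w p\<bar>)"
    by (rule order_trans[OF sum_abs sum_mono]) (simp add: abs_mult le mult_left_mono)
  also have "\<dots> < \<bar>A p p\<bar> * \<bar>w p\<bar>"
    unfolding sum_distrib_right[symmetric]
    using dominant[OF p(1)] le[OF q0] nz by (intro mult_strict_right_mono) auto
  finally show False by simp
qed

section \<open>Pairings and orientations\<close>

lemma is_pairing_lt: "is_pairing m p \<Longrightarrow> x < m \<Longrightarrow> p x < m"
  unfolding is_pairing_def by auto

lemma is_pairing_involution: "is_pairing m p \<Longrightarrow> p (p x) = x"
  unfolding is_pairing_def by (cases "x < m") auto

lemma is_pairing_neq: "is_pairing m p \<Longrightarrow> x < m \<Longrightarrow> p x \<noteq> x"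
  unfolding is_pairing_def by auto

lemma is_pairing_ge: "is_pairing m p \<Longrightarrow> m \<le> x \<Longrightarrow> p x = x"
  unfolding is_pairing_def by auto

lemma is_pairing_permutes:
  assumes p: "is_pairing m p"
  shows "p permutes {..<m}"
  unfolding permutes_def
proof (intro conjI allI impI)
  fix y show "\<exists>!x. p x = y"
    by (rule ex1I[of _ "p y"]) (use is_pairing_involution[OF p] in metis)+
qed (simp add: is_pairing_ge[OF p])

lemma finite_pairings: "finite {p. is_pairing m p}"
  by (rule finite_subset[OF _ finite_permutations[of "{..<m}"]]) (auto intro: is_pairing_permutes)

definition pairs_on :: "'a set \<Rightarrow> ('a \<Rightarrow> 'a) \<Rightarrow> bool" where
  "pairs_on A p \<longleftrightarrow> (\<forall>x\<in>A. p x \<in> A \<and> p x \<noteq> x \<and> p (p x) = x)"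

lemma is_pairing_pairs_on: "is_pairing m p \<Longrightarrow> pairs_on {..<m} p"
  unfolding is_pairing_def pairs_on_def by auto

lemma pairs_on_remove:
  assumes p: "pairs_on A p" and x: "x \<in> A"
  shows "pairs_on (A - {x, p x}) p"
  unfolding pairs_on_def
proof (intro ballI)
  fix u assume u: "u \<in> A - {x, p x}"
  then have "p u \<in> A" "p u \<noteq> u" "p (p u) = u" "p (p x) = x" using p x unfolding pairs_on_def by auto
  with u show "p u \<in> A - {x, p x} \<and> p u \<noteq> u \<and> p (p u) = u" by auto
qed

definition glue_pairing :: "('a \<Rightarrow> 'a) \<Rightarrow> 'a \<Rightarrow> 'a \<Rightarrow> 'a \<Rightarrow> 'a" where
  "glue_pairing p x y = (if p x = y then p else p(p x := p y, p y := p x))"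

lemma pairs_on_glue_pairing:
  assumes p: "pairs_on A p" and x: "x \<in> A" and y: "y \<in> A" "y \<noteq> x"
  shows "pairs_on (A - {x, y}) (glue_pairing p x y)"
proof (cases "p x = y")
  case True
  then show ?thesis using pairs_on_remove[OF p x] unfolding glue_pairing_def by simp
next
  case False
  have px: "p x \<in> A" "p x \<noteq> x" "p (p x) = x" and py: "p y \<in> A" "p y \<noteq> y" "p (p y) = y"
    using p x y unfolding pairs_on_def by auto
  then have ne: "p x \<noteq> p y" "p y \<noteq> x" using y False by metis+
  show ?thesis
    unfolding pairs_on_def glue_pairing_def if_not_P[OF False]
  proof (intro ballI)
    fix u assume u: "u \<in> A - {x, y}"
    then have pu: "p u \<in> A" "p u \<noteq> u" "p (p u) = u" using p unfolding pairs_on_def by auto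
    show "(p(p x := p y, p y := p x)) u \<in> A - {x, y} \<and> (p(p x := p y, p y := p x)) u \<noteq> u
        \<and> (p(p x := p y, p y := p x)) ((p(p x := p y, p y := p x)) u) = u"
    proof (cases "u = p x \<or> u = p y")
      case True
      then show ?thesis using px py ne y False by auto
    next
      case False
      have "p u \<noteq> x" "p u \<noteq> y" using pu False by metis+
      moreover have "p u \<noteq> p x" "p u \<noteq> p y" using pu(3) px(3) py(3) u by (metis Diff_iff insertCI)+
      ultimately show ?thesis using False pu by auto
    qed
  qed
qed

definition coherent_colouring :: "'a set \<Rightarrow> ('a \<Rightarrow> 'a) \<Rightarrow> ('a \<Rightarrow> 'a) \<Rightarrow> 'a set \<Rightarrow> bool" where
  "coherent_colouring A q p S \<longleftrightarrow> S \<subseteq> A \<and> (\<forall>x\<in>A. (x \<in> S \<longleftrightarrow> q x \<notin> S) \<and> (p x \<in> S \<longleftrightarrow> x \<notin> S))"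

text \<open>Contracting the q-edge at x glues its two p-neighbours into one p-edge; a coherent
  colouring of the contraction extends by colouring x or q x.\<close>

lemma coherent_colouring_extend:
  assumes q: "pairs_on A q" and p: "pairs_on A p" and x: "x \<in> A"
    and S': "coherent_colouring (A - {x, q x}) q (glue_pairing p x (q x)) S'"
  shows "coherent_colouring A q p (if p x \<in> S' then insert (q x) S' else insert x S')"
proof -
  define y where "y = q x"
  define A' where "A' = A - {x, y}"
  define p' where "p' = glue_pairing p x y"
  define S where "S = (if p x \<in> S' then insert y S' else insert x S')"
  have y: "y \<in> A" "y \<noteq> x" "q y = x" using q x unfolding pairs_on_def y_def by auto
  have S'A': "S' \<subseteq> A'" and S'_coh: "\<forall>u\<in>A'. (u \<in> S' \<longleftrightarrow> q u \<notin> S') \<and> (p' u \<in> S' \<longleftrightarrow> u \<notin> S')"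
    using S' unfolding coherent_colouring_def A'_def p'_def y_def by auto
  have xy: "x \<notin> S'" "y \<notin> S'" using S'A' unfolding A'_def by auto
  have in_S: "u \<in> S \<longleftrightarrow> u \<in> S'" if "u \<in> A'" for u using that unfolding S_def A'_def by auto
  have S_x: "x \<in> S \<longleftrightarrow> p x \<notin> S'" and S_y: "y \<in> S \<longleftrightarrow> p x \<in> S'"
    using xy y(2) unfolding S_def by auto
  have qA': "q u \<in> A'" if "u \<in> A'" for u
    using pairs_on_remove[OF q x] that unfolding pairs_on_def A'_def y_def by blast
  have p'A': "p' u \<in> A'" if "u \<in> A'" for u
    using pairs_on_glue_pairing[OF p x y(1,2)] that unfolding pairs_on_def A'_def p'_def by blast
  have pp: "p u \<in> A" "p (p u) = u" if "u \<in> A" for u using p that unfolding pairs_on_def by auto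
  have glued: "p x \<in> A'" "p y \<in> A'" "p y \<in> S' \<longleftrightarrow> p x \<notin> S'" if "p x \<noteq> y"
  proof -
    have "p x \<noteq> x" "p y \<noteq> y" using p x y(1) unfolding pairs_on_def by auto
    moreover have "p y \<noteq> x" using that pp[OF y(1)] by metis
    ultimately show A': "p x \<in> A'" "p y \<in> A'" using that pp[OF x] pp[OF y(1)] unfolding A'_def by auto
    have "p' (p x) = p y" using that unfolding p'_def glue_pairing_def by simp
    then show "p y \<in> S' \<longleftrightarrow> p x \<notin> S'" using S'_coh A'(1) by metis
  qed
  have "(u \<in> S \<longleftrightarrow> q u \<notin> S) \<and> (p u \<in> S \<longleftrightarrow> u \<notin> S)" if u: "u \<in> A" for u
  proof (cases "u \<in> A'")
    case True
    have S'_u: "u \<in> S' \<longleftrightarrow> q u \<notin> S'" "p' u \<in> S' \<longleftrightarrow> u \<notin> S'" using bspec[OF S'_coh True] by blast+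
    have "u \<in> S \<longleftrightarrow> q u \<notin> S" using S'_u(1) in_S[OF True] in_S[OF qA'[OF True]] by simp
    moreover have "p u \<in> S \<longleftrightarrow> u \<notin> S"
    proof (cases "p x \<noteq> y \<and> (u = p x \<or> u = p y)")
      case False
      then have "p' u = p u" unfolding p'_def glue_pairing_def by auto
      then show ?thesis using S'_u(2) in_S[OF True] in_S[OF p'A'[OF True]] by simp
    next
      case True
      then consider "u = p x" | "u = p y" by blast
      then show ?thesis
        by cases (use True glued S_x S_y in_S pp[OF x] pp[OF y(1)] in auto)
    qed
    ultimately show ?thesis ..
  next
    case False
    then have u_xy: "u = x \<or> u = y" using u unfolding A'_def by auto
    show ?thesis
    proof (cases "p x = y")
      case True
      then show ?thesis using u_xy S_x S_y xy y pp[OF x] unfolding y_def by auto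
    next
      case False
      then show ?thesis using u_xy S_x S_y y in_S glued[OF False] unfolding y_def by auto
    qed
  qed
  moreover have "S \<subseteq> A" using S'A' x y unfolding S_def A'_def by auto
  ultimately show ?thesis unfolding coherent_colouring_def S_def y_def by blast
qed

lemma exists_coherent_colouring:
  "finite A \<Longrightarrow> pairs_on A q \<Longrightarrow> pairs_on A p \<Longrightarrow> \<exists>S. coherent_colouring A q p S"
proof (induction "card A" arbitrary: A p rule: less_induct)
  case less
  show ?case
  proof (cases "A = {}")
    case False
    then obtain x where x: "x \<in> A" by auto
    then have "q x \<in> A" "q x \<noteq> x" using less.prems(2) unfolding pairs_on_def by auto
    then have "card (A - {x, q x}) < card A" using less.prems(1) x by (intro psubset_card_mono) auto
    moreover have "pairs_on (A - {x, q x}) q" by (rule pairs_on_remove[OF less.prems(2) x])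
    moreover have "pairs_on (A - {x, q x}) (glue_pairing p x (q x))"
      by (rule pairs_on_glue_pairing[OF less.prems(3) x \<open>q x \<in> A\<close> \<open>q x \<noteq> x\<close>])
    ultimately obtain S' where "coherent_colouring (A - {x, q x}) q (glue_pairing p x (q x)) S'"
      using less.hyps less.prems(1) by blast
    then show ?thesis using coherent_colouring_extend[OF less.prems(2,3) x] by blast
  qed (auto simp: coherent_colouring_def)
qed

definition is_orientation :: "nat \<Rightarrow> (nat \<Rightarrow> nat) \<Rightarrow> nat set \<Rightarrow> bool" where
  "is_orientation m q S \<longleftrightarrow> S \<subseteq> {..<m} \<and> (\<forall>x<m. x \<in> S \<longleftrightarrow> q x \<notin> S)"

lemma is_orientation_subset: "is_orientation m q S \<Longrightarrow> S \<subseteq> {..<m}"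
  unfolding is_orientation_def by blast

definition coherent_orientation :: "nat \<Rightarrow> (nat \<Rightarrow> nat) \<Rightarrow> (nat \<Rightarrow> nat) \<Rightarrow> nat set" where
  "coherent_orientation m q p =
     (SOME S. S \<subseteq> {..<m} \<and> (\<forall>x<m. x \<in> S \<longleftrightarrow> q x \<notin> S) \<and> (\<forall>x<m. p x \<in> S \<longleftrightarrow> x \<notin> S))"

lemma coherent_dirs_eq: "coherent_dirs m g p = coherent_orientation m (gpair g) p"
  unfolding coherent_dirs_def coherent_orientation_def ..

lemma
  assumes q: "is_pairing m q" and p: "is_pairing m p"
  shows is_orientation_coherent: "is_orientation m q (coherent_orientation m q p)"
    and is_orientation_coherent_complement: "is_orientation m p ({..<m} - coherent_orientation m q p)"
proof -
  have "\<exists>S. S \<subseteq> {..<m} \<and> (\<forall>x<m. x \<in> S \<longleftrightarrow> q x \<notin> S) \<and> (\<forall>x<m. p x \<in> S \<longleftrightarrow> x \<notin> S)"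
    using exists_coherent_colouring[OF _ is_pairing_pairs_on[OF q] is_pairing_pairs_on[OF p]]
    unfolding coherent_colouring_def by auto
  from someI_ex[OF this] show "is_orientation m q (coherent_orientation m q p)"
    and "is_orientation m p ({..<m} - coherent_orientation m q p)"
    unfolding coherent_orientation_def is_orientation_def using is_pairing_lt[OF p] by auto
qed

definition std_orientation :: "nat \<Rightarrow> (nat \<Rightarrow> nat) \<Rightarrow> nat set" where
  "std_orientation m q = {x. x < m \<and> x < q x}"

lemma is_orientation_std:
  assumes q: "is_pairing m q"
  shows "is_orientation m q (std_orientation m q)"
  unfolding is_orientation_def std_orientation_def
proof (intro conjI allI impI)
  fix x assume "x < m"
  then have "q x < m" "q x \<noteq> x" "q (q x) = x" using q is_pairing_lt is_pairing_neq is_pairing_involution by auto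
  then show "x \<in> {x. x < m \<and> x < q x} \<longleftrightarrow> q x \<notin> {x. x < m \<and> x < q x}" using \<open>x < m\<close> by auto
qed auto

lemma finite_orientations: "finite {S. is_orientation m q S}"
  by (rule finite_subset[of _ "Pow {..<m}"]) (auto simp: is_orientation_def)

lemma finite_is_orientation: "is_orientation m q S \<Longrightarrow> finite S"
  unfolding is_orientation_def using finite_subset by blast

context
  fixes m q A B C
  assumes q: "is_pairing m q"
    and A: "is_orientation m q A" and B: "is_orientation m q B" and C: "is_orientation m q C"
begin

lemma card_orientation_cross: "card (A \<inter> C - B) = card (B - A - C)"
proof -
  have "q ` (B - A - C) = A \<inter> C - B"
  proof
    show "q ` (B - A - C) \<subseteq> A \<inter> C - B"
      using A B C unfolding is_orientation_def by auto
    show "A \<inter> C - B \<subseteq> q ` (B - A - C)"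
    proof
      fix y assume y: "y \<in> A \<inter> C - B"
      then have "q y \<in> B - A - C" using A B C is_pairing_involution[OF q, of y]
        unfolding is_orientation_def by auto
      then show "y \<in> q ` (B - A - C)" using is_pairing_involution[OF q, of y] by force
    qed
  qed
  moreover have "inj q" by (rule injI) (use is_pairing_involution[OF q] in metis)
  ultimately show ?thesis using card_image[OF inj_on_subset[OF \<open>inj q\<close>]] by (metis subset_UNIV)
qed

lemma orientation_sign_mult: "(-1::real) ^ card (A - B) * (-1) ^ card (A - C) = (-1) ^ card (B - C)"
proof -
  have card_split: "card (X - Y) = card (X - Y - Z) + card (X \<inter> Z - Y)" if "finite X" for X Y Z
  proof -
    have "card (X - Y) = card ((X - Y - Z) \<union> (X \<inter> Z - Y))" by (rule arg_cong[where f = card]) blast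
    also have "\<dots> = card (X - Y - Z) + card (X \<inter> Z - Y)" by (rule card_Un_disjoint) (use that in auto)
    finally show ?thesis .
  qed
  have fin: "finite A" "finite B" using A B by (simp_all add: finite_is_orientation)
  have "card (A - B) = card (A - B - C) + card (A \<inter> C - B)" by (rule card_split[OF fin(1)])
  moreover have "card (A - C) = card (A - B - C) + card (A \<inter> B - C)"
    using card_split[OF fin(1), of C B] by (simp add: Diff_eq Int_ac)
  moreover have "card (B - C) = card (B - A - C) + card (A \<inter> B - C)"
    using card_split[OF fin(2), of C A] by (simp add: Diff_eq Int_ac)
  ultimately have "card (A - B) + card (A - C) = 2 * card (A - B - C) + card (B - C)"
    using card_orientation_cross by simp
  then show ?thesis by (simp add: power_add[symmetric]) (simp add: power_add power_mult)
qed

end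

lemma card_orientation_diff_commute:
  "is_pairing m q \<Longrightarrow> is_orientation m q A \<Longrightarrow> is_orientation m q B \<Longrightarrow> card (A - B) = card (B - A)"
  using card_orientation_cross[of m q A B A] by (simp add: Int_absorb Diff_idemp)

definition flip_orientation :: "(nat \<Rightarrow> nat) \<Rightarrow> nat set \<Rightarrow> nat \<Rightarrow> nat set" where
  "flip_orientation q S x = (S - {x, q x}) \<union> ({x, q x} - S)"

lemma is_orientation_flip:
  assumes q: "is_pairing m q" and A: "is_orientation m q A" and x: "x < m"
  shows "is_orientation m q (flip_orientation q A x)"
  unfolding is_orientation_def
proof (intro conjI allI impI)
  have "{x, q x} \<subseteq> {..<m}" using is_pairing_lt[OF q x] x by simp
  then show "flip_orientation q A x \<subseteq> {..<m}"
    using A unfolding is_orientation_def flip_orientation_def by blast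
next
  fix y assume y: "y < m"
  have A_y: "y \<in> A \<longleftrightarrow> q y \<notin> A" using A y unfolding is_orientation_def by blast
  have "q y = x \<longleftrightarrow> y = q x" "q y = q x \<longleftrightarrow> y = x"
    using is_pairing_involution[OF q, of x] is_pairing_involution[OF q, of y] by metis+
  then have "q y \<in> {x, q x} \<longleftrightarrow> y \<in> {x, q x}" by blast
  then show "y \<in> flip_orientation q A x \<longleftrightarrow> q y \<notin> flip_orientation q A x"
    unfolding flip_orientation_def using A_y by blast
qed

lemma card_diff_flip_orientation:
  assumes q: "is_pairing m q" and A: "is_orientation m q A" and x: "x < m"
  shows "card (A - flip_orientation q A x) = 1"
proof -
  have "A - flip_orientation q A x = A \<inter> {x, q x}" unfolding flip_orientation_def by auto
  moreover have "A \<inter> {x, q x} = {x} \<or> A \<inter> {x, q x} = {q x}"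
    using A x unfolding is_orientation_def by auto
  ultimately show ?thesis by auto
qed

lemma sign_flip_orientation:
  assumes q: "is_pairing m q" and A: "is_orientation m q A" and C: "is_orientation m q C" and x: "x < m"
  shows "(-1::real) ^ card (flip_orientation q A x - C) = - ((-1) ^ card (A - C))"
  using orientation_sign_mult[OF q A is_orientation_flip[OF q A x] C] card_diff_flip_orientation[OF q A x]
  by simp

section \<open>Circles of two pairings\<close>

definition circle_rel :: "nat \<Rightarrow> (nat \<Rightarrow> nat) \<Rightarrow> (nat \<Rightarrow> nat) \<Rightarrow> (nat \<times> nat) set" where
  "circle_rel m q p = {(x, q x) | x. x < m} \<union> {(x, p x) | x. x < m}"

definition circle :: "nat \<Rightarrow> (nat \<Rightarrow> nat) \<Rightarrow> (nat \<Rightarrow> nat) \<Rightarrow> nat \<Rightarrow> nat set" where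
  "circle m q p x = {y. (x, y) \<in> (circle_rel m q p)\<^sup>*}"

lemma num_circles_eq_card_circles: "num_circles m q p = card (circle m q p ` {..<m})"
  unfolding num_circles_def circle_def circle_rel_def Let_def ..

lemma circle_rel_iff: "(x, y) \<in> circle_rel m q p \<longleftrightarrow> x < m \<and> (y = q x \<or> y = p x)"
  unfolding circle_rel_def by blast

context
  fixes m q p
  assumes q: "is_pairing m q" and p: "is_pairing m p"
begin

lemma sym_circle_rel: "sym (circle_rel m q p)"
  unfolding sym_def circle_rel_iff
proof (intro allI impI)
  fix x y assume "x < m \<and> (y = q x \<or> y = p x)"
  then show "y < m \<and> (x = q y \<or> x = p y)"
    using is_pairing_lt[OF q, of x] is_pairing_lt[OF p, of x] is_pairing_involution[OF q, of x]
      is_pairing_involution[OF p, of x] by auto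
qed

lemma circle_subset: "x < m \<Longrightarrow> circle m q p x \<subseteq> {..<m}"
proof
  fix y assume "x < m" "y \<in> circle m q p x"
  then have "(x, y) \<in> (circle_rel m q p)\<^sup>*" "x < m" unfolding circle_def by simp_all
  then show "y \<in> {..<m}"
    by (induction rule: rtrancl_induct) (auto simp: circle_rel_iff is_pairing_lt[OF q] is_pairing_lt[OF p])
qed

lemma circle_self: "x \<in> circle m q p x"
  unfolding circle_def by simp

lemma circle_eq: "y \<in> circle m q p x \<Longrightarrow> circle m q p y = circle m q p x"
  unfolding circle_def using symD[OF sym_rtrancl[OF sym_circle_rel]] by (blast intro: rtrancl_trans)

lemma sum_card_circles: "sum card (circle m q p ` {..<m}) = m"
proof -
  have "\<Union>(circle m q p ` {..<m}) = {..<m}" using circle_subset circle_self by blast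
  moreover have "circle m q p x \<inter> circle m q p y = {}" if "circle m q p x \<noteq> circle m q p y" for x y
    using that circle_eq by (metis Int_emptyI)
  then have "pairwise disjnt (circle m q p ` {..<m})"
    unfolding pairwise_def disjnt_def by auto
  moreover have "finite C" if "C \<in> circle m q p ` {..<m}" for C
    using that finite_subset[OF circle_subset] by auto
  ultimately show ?thesis using card_Union_disjoint[of "circle m q p ` {..<m}"] by simp
qed

lemma card_le_card_circle: "x < m \<Longrightarrow> A \<subseteq> circle m q p x \<Longrightarrow> card A \<le> card (circle m q p x)"
  by (rule card_mono[OF finite_subset[OF circle_subset finite_lessThan]])

lemma neighbours_in_circle: "x < m \<Longrightarrow> {x, q x, p x} \<subseteq> circle m q p x"
  using circle_rel_iff[of x "q x" m q p] circle_rel_iff[of x "p x" m q p] unfolding circle_def by auto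

end

lemma num_circles_diag:
  assumes p: "is_pairing m p"
  shows "m \<le> 2 * num_circles m p p"
proof -
  have "circle m p p x \<subseteq> {x, p x}" for x
  proof
    fix y assume "y \<in> circle m p p x"
    then have "(x, y) \<in> (circle_rel m p p)\<^sup>*" unfolding circle_def by simp
    then show "y \<in> {x, p x}"
      by (induction rule: rtrancl_induct) (auto simp: circle_rel_iff is_pairing_involution[OF p])
  qed
  then have "card (circle m p p x) \<le> 2" for x
    using card_mono[of "{x, p x}" "circle m p p x"] by (simp add: card_insert_if) (simp add: le_trans)
  then have "card C \<le> 2" if "C \<in> circle m p p ` {..<m}" for C using that by blast
  then have "sum card (circle m p p ` {..<m}) \<le> card (circle m p p ` {..<m}) * 2"
    using sum_bounded_above[of "circle m p p ` {..<m}" card 2] by simp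
  then show ?thesis using sum_card_circles[OF p p] unfolding num_circles_eq_card_circles by simp
qed

text \<open>Where two different pairings disagree, their circle has at least three half-edges.\<close>

lemma num_circles_off_diag:
  assumes q: "is_pairing m q" and p: "is_pairing m p" and ne: "q \<noteq> p"
  shows "2 * num_circles m q p < m"
proof -
  obtain x0 where x0: "q x0 \<noteq> p x0" using ne by blast
  have x0m: "x0 < m"
  proof (rule ccontr)
    assume "\<not> x0 < m"
    then show False using x0 is_pairing_ge[OF q, of x0] is_pairing_ge[OF p, of x0] by simp
  qed
  let ?C = "circle m q p ` {..<m}" and ?c0 = "circle m q p x0"
  have c0: "?c0 \<in> ?C" using x0m by blast
  have "card {x0, q x0, p x0} = 3" using x0 is_pairing_neq[OF q x0m] is_pairing_neq[OF p x0m] by simp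
  then have "3 \<le> card ?c0" using card_le_card_circle[OF q p x0m neighbours_in_circle[OF q p x0m]] by simp
  moreover have "2 \<le> card (circle m q p x)" if "x < m" for x
  proof -
    have sub: "{x, q x} \<subseteq> circle m q p x" using neighbours_in_circle[OF q p that] by blast
    have "card {x, q x} = 2" using is_pairing_neq[OF q that] by simp
    then show ?thesis using card_le_card_circle[OF q p that sub] by simp
  qed
  then have "2 \<le> card C" if "C \<in> ?C - {?c0}" for C using that by blast
  then have "card (?C - {?c0}) * 2 \<le> sum card (?C - {?c0})"
    using sum_bounded_below[of "?C - {?c0}" 2 card] by simp
  moreover have "sum card ?C = card ?c0 + sum card (?C - {?c0})" using sum.remove[OF _ c0] by simp
  moreover have "card (?C - {?c0}) + 1 = card ?C" using c0 card_Suc_Diff1[of ?C ?c0] by simp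
  ultimately show ?thesis using sum_card_circles[OF q p] unfolding num_circles_eq_card_circles by linarith
qed

lemma num_circles_lt_diag:
  "is_pairing m q \<Longrightarrow> is_pairing m p \<Longrightarrow> q \<noteq> p \<Longrightarrow> num_circles m q p < num_circles m p p"
  using num_circles_off_diag[of m q p] num_circles_diag[of m p] by linarith

lemma rtrancl_map:
  assumes "(a, b) \<in> R\<^sup>*" and "\<And>x y. (x, y) \<in> R \<Longrightarrow> (f x, f y) \<in> S"
  shows "(f a, f b) \<in> S\<^sup>*"
  using assms(1) by (induction rule: rtrancl_induct) (auto intro: rtrancl_into_rtrancl assms(2))

definition conj_pairing :: "(nat \<Rightarrow> nat) \<Rightarrow> (nat \<Rightarrow> nat) \<Rightarrow> nat \<Rightarrow> nat" where
  "conj_pairing t p = t \<circ> p \<circ> inv t"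

lemma conj_pairing_apply: "t permutes {..<m} \<Longrightarrow> conj_pairing t p (t x) = t (p x)"
  unfolding conj_pairing_def by (simp add: permutes_inverses(2))

lemma is_pairing_conj:
  assumes t: "t permutes {..<m}" and p: "is_pairing m p"
  shows "is_pairing m (conj_pairing t p)"
  unfolding is_pairing_def
proof (intro conjI allI impI)
  fix x assume x: "x < m"
  then have "x \<in> t ` {..<m}" using permutes_image[OF t] by simp
  then obtain y where y: "y < m" "x = t y" by blast
  have "t (p y) < m" using permutes_in_image[OF t] is_pairing_lt[OF p y(1)] by simp
  moreover have "t (p y) \<noteq> t y" using is_pairing_neq[OF p y(1)] inj_eq[OF permutes_inj[OF t]] by simp
  moreover have "conj_pairing t p (t (p y)) = t y"
    using conj_pairing_apply[OF t] is_pairing_involution[OF p] by simp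
  ultimately show "conj_pairing t p x < m" "conj_pairing t p x \<noteq> x" "conj_pairing t p (conj_pairing t p x) = x"
    unfolding y(2) conj_pairing_apply[OF t] by simp_all
next
  fix x assume "m \<le> x"
  then show "conj_pairing t p x = x"
    using permutes_not_in[OF t] permutes_not_in[OF permutes_inv[OF t]] is_pairing_ge[OF p]
    unfolding conj_pairing_def by simp
qed

lemma circle_rel_conj:
  assumes t: "t permutes {..<m}"
  shows "(t x, t y) \<in> circle_rel m (conj_pairing t q) (conj_pairing t p) \<longleftrightarrow> (x, y) \<in> circle_rel m q p"
  using permutes_in_image[OF t] permutes_inj[OF t]
  by (simp add: circle_rel_iff conj_pairing_apply[OF t] inj_eq)

lemma circle_conj:
  assumes t: "t permutes {..<m}"
  shows "circle m (conj_pairing t q) (conj_pairing t p) (t x) = t ` circle m q p x"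
proof
  let ?R = "circle_rel m q p" and ?R' = "circle_rel m (conj_pairing t q) (conj_pairing t p)"
  show "t ` circle m q p x \<subseteq> circle m (conj_pairing t q) (conj_pairing t p) (t x)"
  proof
    fix y assume "y \<in> t ` circle m q p x"
    then obtain z where "(x, z) \<in> ?R\<^sup>*" "y = t z" unfolding circle_def by blast
    moreover have "(t a, t b) \<in> ?R'" if "(a, b) \<in> ?R" for a b using that circle_rel_conj[OF t] by blast
    ultimately show "y \<in> circle m (conj_pairing t q) (conj_pairing t p) (t x)"
      unfolding circle_def using rtrancl_map[of x z ?R t ?R'] by blast
  qed
  show "circle m (conj_pairing t q) (conj_pairing t p) (t x) \<subseteq> t ` circle m q p x"
  proof
    fix y assume "y \<in> circle m (conj_pairing t q) (conj_pairing t p) (t x)"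
    then have "(t x, y) \<in> ?R'\<^sup>*" unfolding circle_def by simp
    moreover have "(inv t a, inv t b) \<in> ?R" if "(a, b) \<in> ?R'" for a b
      using that circle_rel_conj[OF t, of "inv t a" "inv t b"] permutes_inverses(1)[OF t] by simp
    ultimately have "(inv t (t x), inv t y) \<in> ?R\<^sup>*" by (rule rtrancl_map)
    then have "inv t y \<in> circle m q p x" unfolding circle_def using permutes_inverses(2)[OF t] by simp
    then show "y \<in> t ` circle m q p x" using permutes_inverses(1)[OF t, of y] by (metis image_eqI)
  qed
qed

lemma num_circles_conj:
  assumes t: "t permutes {..<m}"
  shows "num_circles m (conj_pairing t q) (conj_pairing t p) = num_circles m q p"
proof -
  have "circle m (conj_pairing t q) (conj_pairing t p) ` {..<m}
      = circle m (conj_pairing t q) (conj_pairing t p) ` t ` {..<m}"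
    using permutes_image[OF t] by simp
  also have "\<dots> = image t ` circle m q p ` {..<m}" by (simp add: image_image circle_conj[OF t])
  finally have "circle m (conj_pairing t q) (conj_pairing t p) ` {..<m} = image t ` circle m q p ` {..<m}" .
  moreover have "inj_on (image t) (circle m q p ` {..<m})"
    by (rule inj_onI) (simp add: inj_image_eq_iff[OF permutes_inj[OF t]])
  ultimately show ?thesis unfolding num_circles_eq_card_circles by (simp add: card_image)
qed

lemma bij_betw_conj_pairing:
  assumes t: "t permutes {..<m}"
  shows "bij_betw (conj_pairing t) {p. is_pairing m p} {p. is_pairing m p}"
proof (rule bij_betw_byWitness[where f' = "conj_pairing (inv t)"])
  have "conj_pairing (inv t) (conj_pairing t p) = p" "conj_pairing t (conj_pairing (inv t) p) = p" for p
    unfolding conj_pairing_def permutes_inv_inv[OF t] by (simp_all add: fun_eq_iff permutes_inverses[OF t])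
  then show "\<forall>p\<in>{p. is_pairing m p}. conj_pairing (inv t) (conj_pairing t p) = p"
    "\<forall>p\<in>{p. is_pairing m p}. conj_pairing t (conj_pairing (inv t) p) = p" by simp_all
  show "conj_pairing t ` {p. is_pairing m p} \<subseteq> {p. is_pairing m p}"
    "conj_pairing (inv t) ` {p. is_pairing m p} \<subseteq> {p. is_pairing m p}"
    using is_pairing_conj[OF t] is_pairing_conj[OF permutes_inv[OF t]] by blast+
qed

section \<open>Linearity of M_n and its restriction to graphs with fixed vertex data\<close>

lemma M_op_eq_sum: "finite T \<Longrightarrow> {g. f g \<noteq> 0} \<subseteq> T \<Longrightarrow> M_op n m f s = (\<Sum>g\<in>T. f g * M_gen n m g s)"
  unfolding M_op_def by (rule sum.mono_neutral_left) auto

lemma finite_supp_M_gen: "finite_supp (M_gen n m g)"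
  unfolding M_gen_def by (rule finite_supp_sum) (rule finite_supp_delta)

lemma M_op_delta: "M_op n m (delta g) = M_gen n m g"
  by (rule ext) (simp add: M_op_eq_sum[of "{g}"] delta_def)

lemma linear_on_finite_supp_M_op: "linear_on_finite_supp (M_op n m)"
  unfolding linear_on_finite_supp_def
proof (intro conjI allI impI)
  fix f :: "'a ograph \<Rightarrow> real"
  show "finite_supp (M_op n m f)" unfolding M_op_def by (rule finite_supp_sum) (rule finite_supp_M_gen)
  fix c assume f: "finite_supp f"
  show "M_op n m (\<lambda>x. c * f x) = (\<lambda>x. c * M_op n m f x)"
  proof
    fix s
    have "M_op n m (\<lambda>x. c * f x) s = (\<Sum>g | f g \<noteq> 0. c * f g * M_gen n m g s)"
      by (rule M_op_eq_sum) (use f in \<open>auto simp: finite_supp_def\<close>)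
    then show "M_op n m (\<lambda>x. c * f x) s = c * M_op n m f s"
      by (simp add: M_op_def sum_distrib_left mult.assoc)
  qed
next
  fix f h :: "'a ograph \<Rightarrow> real" assume "finite_supp f" "finite_supp h"
  then have T: "finite ({g. f g \<noteq> 0} \<union> {g. h g \<noteq> 0})" by (simp add: finite_supp_def)
  show "M_op n m (\<lambda>x. f x + h x) = (\<lambda>x. M_op n m f x + M_op n m h x)"
  proof
    fix s
    have "M_op n m (\<lambda>x. f x + h x) s = (\<Sum>g \<in> {g. f g \<noteq> 0} \<union> {g. h g \<noteq> 0}. (f g + h g) * M_gen n m g s)"
      by (rule M_op_eq_sum[OF T]) auto
    also have "\<dots> = M_op n m f s + M_op n m h s"
      by (simp add: M_op_eq_sum[OF T] distrib_right sum.distrib)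
    finally show "M_op n m (\<lambda>x. f x + h x) s = M_op n m f s + M_op n m h s" .
  qed
qed

lemma sum_delta_mult: "finite A \<Longrightarrow> (\<Sum>k\<in>A. delta a k * c k) = (if a \<in> A then c a else 0)"
  unfolding delta_def by (simp add: if_distrib[of "\<lambda>t. t * _"] sum.delta cong: if_cong)

definition oriented_pairings :: "nat \<Rightarrow> ((nat \<Rightarrow> nat) \<times> nat set) set" where
  "oriented_pairings m = {(q, S). is_pairing m q \<and> is_orientation m q S}"

lemma oriented_pairings_iff [simp]:
  "(q, S) \<in> oriented_pairings m \<longleftrightarrow> is_pairing m q \<and> is_orientation m q S"
  unfolding oriented_pairings_def by simp

lemma finite_oriented_pairings: "finite (oriented_pairings m)"
  by (rule finite_subset[of _ "{p. is_pairing m p} \<times> Pow {..<m}"])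
    (auto simp: oriented_pairings_def is_orientation_def finite_pairings)

definition with_edges :: "'a ograph \<Rightarrow> (nat \<Rightarrow> nat) \<times> nat set \<Rightarrow> 'a ograph" where
  "with_edges g i = OGraph (fst i) (gvtx g) (snd i) (glab g) (gcol g)"

lemma with_edges_self: "with_edges g (gpair g, gst g) = g"
  unfolding with_edges_def by (cases g) simp

lemma with_edges_with_edges: "with_edges (with_edges g i) j = with_edges g j"
  unfolding with_edges_def by simp

lemma oriented_pairings_valid: "valid_ograph Op k m g \<Longrightarrow> (gpair g, gst g) \<in> oriented_pairings m"
  by (simp add: valid_ograph_def is_orientation_def)

lemma valid_with_edges:
  assumes g: "valid_ograph Op k m g" and i: "i \<in> oriented_pairings m"
  shows "valid_ograph Op k m (with_edges g i)"
proof -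
  have "valence m (with_edges g i) v = valence m g v" for v unfolding valence_def with_edges_def by simp
  moreover have "is_pairing m (fst i)" "is_orientation m (fst i) (snd i)" using i by (cases i; simp)+
  ultimately show ?thesis using g unfolding valid_ograph_def with_edges_def is_orientation_def
    by (simp add: valence_def)
qed

lemma regluing_with_edges:
  "regluing m (with_edges g (q, S)) p = with_edges g (p, {..<m} - coherent_orientation m q p)"
  unfolding regluing_def with_edges_def coherent_dirs_eq by simp

lemma valid_regluing:
  assumes g: "valid_ograph Op k m g" and p: "is_pairing m p"
  shows "valid_ograph Op k m (regluing m g p)"
proof -
  have q: "is_pairing m (gpair g)" using g unfolding valid_ograph_def by blast
  have "regluing m g p = with_edges g (p, {..<m} - coherent_orientation m (gpair g) p)"
    using regluing_with_edges[of m g "gpair g" "gst g" p] by (simp add: with_edges_self)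
  then show ?thesis
    using valid_with_edges[OF g] is_orientation_coherent_complement[OF q p] p by simp
qed

lemma flip_edge_with_edges: "flip_edge (with_edges g (q, S)) x = with_edges g (q, flip_orientation q S x)"
  unfolding flip_edge_def with_edges_def flip_orientation_def by simp

definition circle_weight :: "nat \<Rightarrow> nat \<Rightarrow> (nat \<Rightarrow> nat) \<Rightarrow> (nat \<Rightarrow> nat) \<Rightarrow> real" where
  "circle_weight n m q p = (2 * real n) ^ num_circles m q p"

lemma M_gen_with_edges: "M_gen n m (with_edges g (q, S)) =
   (\<lambda>s. \<Sum>p | is_pairing m p. circle_weight n m q p * (-1) ^ card (S - coherent_orientation m q p)
      * delta (with_edges g (p, {..<m} - coherent_orientation m q p)) s)"
proof -
  have "gpair (with_edges g (q, S)) = q" "gst (with_edges g (q, S)) = S" unfolding with_edges_def by simp_all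
  then show ?thesis
    unfolding M_gen_def regluing_with_edges regluing_sign_def coherent_dirs_eq circle_weight_def by simp
qed

text \<open>For fixed vertex data g, M_n acts on the span of the graphs with_edges g i, i ranging over
  the finite set of oriented pairings, by the matrix block_coeff.\<close>

definition block_coeff :: "nat \<Rightarrow> nat \<Rightarrow> (nat \<Rightarrow> nat) \<times> nat set \<Rightarrow> (nat \<Rightarrow> nat) \<times> nat set \<Rightarrow> real" where
  "block_coeff n m i j =
     (if is_pairing m (fst j) \<and> snd j = {..<m} - coherent_orientation m (fst i) (fst j)
      then circle_weight n m (fst i) (fst j) * (-1) ^ card (snd i - coherent_orientation m (fst i) (fst j))
      else 0)"

definition block_op :: "nat \<Rightarrow> nat \<Rightarrow> ((nat \<Rightarrow> nat) \<times> nat set \<Rightarrow> real) \<Rightarrow> (nat \<Rightarrow> nat) \<times> nat set \<Rightarrow> real" where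
  "block_op n m v = (\<lambda>j. \<Sum>i\<in>oriented_pairings m. v i * block_coeff n m i j)"

definition lift :: "nat \<Rightarrow> 'a ograph \<Rightarrow> ((nat \<Rightarrow> nat) \<times> nat set \<Rightarrow> real) \<Rightarrow> 'a ograph \<Rightarrow> real" where
  "lift m g v = (\<lambda>s. \<Sum>i\<in>oriented_pairings m. v i * delta (with_edges g i) s)"

lemma lift_sum: "lift m g (\<lambda>j. \<Sum>r\<in>A. c r * F r j) = (\<lambda>s. \<Sum>r\<in>A. c r * lift m g (F r) s)"
  unfolding lift_def
  by (rule ext) (simp add: sum_distrib_right sum_distrib_left mult.assoc sum.swap[of _ "oriented_pairings m" A])

lemma lift_diff: "lift m g (\<lambda>j. v j - w j) = (\<lambda>s. lift m g v s - lift m g w s)"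
  unfolding lift_def by (rule ext) (simp add: left_diff_distrib sum_subtractf)

lemma lift_delta: "i \<in> oriented_pairings m \<Longrightarrow> lift m g (delta i) = delta (with_edges g i)"
  unfolding lift_def by (rule ext) (simp add: sum_delta_mult finite_oriented_pairings)

lemma block_op_supported: "block_op n m v \<in> supported_on (oriented_pairings m)"
  unfolding supported_on_def block_op_def
proof (intro CollectI allI impI sum.neutral ballI)
  fix j i assume j: "j \<notin> oriented_pairings m" and i: "i \<in> oriented_pairings m"
  obtain q S where "i = (q, S)" by (cases i)
  then have "block_coeff n m i j = 0"
    using j i is_orientation_coherent_complement unfolding block_coeff_def by (cases j) auto
  then show "v i * block_coeff n m i j = 0" by simp
qed

lemma linear_on_finite_supp_block_op: "linear_on_finite_supp (block_op n m)"
  unfolding linear_on_finite_supp_def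
  using finite_supp_supported_on[OF finite_oriented_pairings block_op_supported]
  by (auto simp: block_op_def fun_eq_iff distrib_right sum.distrib sum_distrib_left mult.assoc)

lemma M_gen_with_edges_eq_lift:
  assumes i: "i \<in> oriented_pairings m"
  shows "M_gen n m (with_edges g i) = lift m g (block_coeff n m i)"
proof
  fix s
  obtain q S where iqs: "i = (q, S)" by (cases i)
  have q: "is_pairing m q" using i iqs by auto
  define h where "h p = (p, {..<m} - coherent_orientation m q p)" for p
  have hI: "h ` {p. is_pairing m p} \<subseteq> oriented_pairings m"
    unfolding h_def using is_orientation_coherent_complement[OF q] by auto
  have "inj h" unfolding h_def by (rule injI) simp
  have "lift m g (block_coeff n m i) s
      = (\<Sum>j\<in>h ` {p. is_pairing m p}. block_coeff n m i j * delta (with_edges g j) s)"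
    unfolding lift_def
    by (rule sum.mono_neutral_right[OF finite_oriented_pairings hI])
      (auto simp: block_coeff_def h_def iqs)
  also have "\<dots> = M_gen n m (with_edges g i) s"
    unfolding iqs M_gen_with_edges
    by (subst sum.reindex[OF inj_on_subset[OF \<open>inj h\<close> subset_UNIV]]) (simp add: block_coeff_def h_def)
  finally show "M_gen n m (with_edges g i) s = lift m g (block_coeff n m i) s" ..
qed

lemma M_op_lift: "M_op n m (lift m g v) = lift m g (block_op n m v)"
proof -
  have "M_op n m (lift m g v) = (\<lambda>s. \<Sum>i\<in>oriented_pairings m. v i * M_op n m (delta (with_edges g i)) s)"
    unfolding lift_def by (rule linear_on_finite_supp_sum[OF linear_on_finite_supp_M_op finite_supp_delta])
  also have "\<dots> = lift m g (block_op n m v)"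
    unfolding lift_sum block_op_def M_op_delta
    by (simp add: M_gen_with_edges_eq_lift)
  finally show ?thesis .
qed

lemma M_op_pow_lift: "(M_op n m ^^ j) (lift m g v) = lift m g ((block_op n m ^^ j) v)"
  by (induction j) (simp_all add: M_op_lift)

lemma poly_op_M_op_lift: "poly_op c d (M_op n m) (lift m g v) = lift m g (poly_op c d (block_op n m) v)"
  unfolding poly_op_def M_op_pow_lift lift_sum ..

lemma linear_on_finite_supp_span:
  assumes T: "linear_on_finite_supp T" and W: "fun_vec.subspace W"
    and G: "\<And>r. r \<in> G \<Longrightarrow> finite_supp r \<and> T r \<in> W" and v: "v \<in> fun_vec.span G"
  shows "finite_supp v \<and> T v \<in> W"
proof -
  let ?X = "{v. finite_supp v \<and> T v \<in> W}"
  have "0 \<in> ?X"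
    using linear_on_finite_supp_zero[OF T] fun_vec.subspace_0[OF W] by (simp add: zero_fun_def finite_supp_def)
  moreover have "f + h \<in> ?X" if "f \<in> ?X" "h \<in> ?X" for f h
    using that subspace_add_fun[OF subspace_finite_supp, of f h] subspace_add_fun[OF W, of "T f" "T h"]
    by (simp add: plus_fun_def linear_on_finite_supp_add[OF T])
  moreover have "(\<lambda>x. c * f x) \<in> ?X" if "f \<in> ?X" for c f
    using that fun_vec.subspace_scale[OF subspace_finite_supp, of f c] fun_vec.subspace_scale[OF W, of "T f" c]
    by (simp add: linear_on_finite_supp_scale[OF T])
  ultimately have "fun_vec.subspace ?X" unfolding fun_vec.subspace_def by blast
  then show ?thesis using fun_vec.span_induct[OF v, of "\<lambda>v. finite_supp v \<and> T v \<in> W"] G by blast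
qed

section \<open>Orientation reversal inside a block\<close>

definition flip_relations :: "nat \<Rightarrow> ((nat \<Rightarrow> nat) \<times> nat set \<Rightarrow> real) set" where
  "flip_relations m = {(\<lambda>j. delta (q, S) j + delta (q, flip_orientation q S x) j) | q S x.
      (q, S) \<in> oriented_pairings m \<and> x < m}"

definition flip_span :: "nat \<Rightarrow> ((nat \<Rightarrow> nat) \<times> nat set \<Rightarrow> real) set" where
  "flip_span m = fun_vec.span (flip_relations m)"

lemma subspace_flip_span: "fun_vec.subspace (flip_span m)"
  unfolding flip_span_def by (rule fun_vec.subspace_span)

lemma flip_relation_in_flip_span:
  "(q, S) \<in> oriented_pairings m \<Longrightarrow> x < m \<Longrightarrow> (\<lambda>j. delta (q, S) j + delta (q, flip_orientation q S x) j) \<in> flip_span m"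
  unfolding flip_span_def flip_relations_def by (rule fun_vec.span_base) blast

lemma flip_span_image:
  assumes T: "linear_on_finite_supp T" and W: "fun_vec.subspace W"
    and flip: "\<And>q S x. (q, S) \<in> oriented_pairings m \<Longrightarrow> x < m \<Longrightarrow>
      T (\<lambda>j. delta (q, S) j + delta (q, flip_orientation q S x) j) \<in> W"
    and v: "v \<in> flip_span m"
  shows "T v \<in> W"
proof -
  have "finite_supp r \<and> T r \<in> W" if rel: "r \<in> flip_relations m" for r
  proof -
    obtain q S x where r: "r = (\<lambda>j. delta (q, S) j + delta (q, flip_orientation q S x) j)"
      and qS: "(q, S) \<in> oriented_pairings m" and x: "x < m"
      using rel unfolding flip_relations_def by blast
    have "finite_supp r"
      unfolding r by (rule subspace_add_fun[OF subspace_finite_supp, simplified]) (simp_all add: finite_supp_delta)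
    then show ?thesis using flip[OF qS x] r by simp
  qed
  then show ?thesis using linear_on_finite_supp_span[OF T W] v unfolding flip_span_def by blast
qed

lemma og_rel_eq_span: "og_rel Op act k m = fun_vec.span (og_relations Op act k m)"
  unfolding og_rel_def fspan_eq_span ..

lemma subspace_og_rel: "fun_vec.subspace (og_rel Op act k m)"
  unfolding og_rel_eq_span by (rule fun_vec.subspace_span)

lemma flip_relation_og_rel:
  "valid_ograph Op k m g \<Longrightarrow> x < m \<Longrightarrow> (\<lambda>s. delta g s + delta (flip_edge g x) s) \<in> og_rel Op act k m"
  unfolding og_rel_eq_span og_relations_def by (rule fun_vec.span_base, rule UnI1, rule UnI1, rule UnI1) blast

lemma linear_on_finite_supp_lift: "linear_on_finite_supp (lift m g)"
  unfolding linear_on_finite_supp_def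
proof (intro conjI allI impI)
  fix v :: "(nat \<Rightarrow> nat) \<times> nat set \<Rightarrow> real"
  show "finite_supp (lift m g v)" unfolding lift_def by (rule finite_supp_sum) (rule finite_supp_delta)
qed (simp_all add: lift_def fun_eq_iff distrib_right sum.distrib sum_distrib_left mult.assoc)

lemma lift_flip_span:
  assumes g: "valid_ograph Op k m g" and v: "v \<in> flip_span m"
  shows "lift m g v \<in> og_rel Op act k m"
proof (rule flip_span_image[OF linear_on_finite_supp_lift subspace_og_rel _ v])
  fix q S x assume qS: "(q, S) \<in> oriented_pairings m" and x: "x < m"
  then have qS': "(q, flip_orientation q S x) \<in> oriented_pairings m" by (simp add: is_orientation_flip)
  have "lift m g (\<lambda>j. delta (q, S) j + delta (q, flip_orientation q S x) j)
      = (\<lambda>s. delta (with_edges g (q, S)) s + delta (flip_edge (with_edges g (q, S)) x) s)"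
    by (simp add: linear_on_finite_supp_add[OF linear_on_finite_supp_lift] finite_supp_delta
        lift_delta[OF qS] lift_delta[OF qS'] flip_edge_with_edges)
  moreover have "valid_ograph Op k m (with_edges g (q, S))" by (rule valid_with_edges[OF g qS])
  ultimately show "lift m g (\<lambda>j. delta (q, S) j + delta (q, flip_orientation q S x) j) \<in> og_rel Op act k m"
    using flip_relation_og_rel x by simp
qed

definition orientation_sum :: "nat \<Rightarrow> ((nat \<Rightarrow> nat) \<times> nat set \<Rightarrow> real) \<Rightarrow> (nat \<Rightarrow> nat) \<Rightarrow> real" where
  "orientation_sum m v q = (\<Sum>S | is_orientation m q S. (-1) ^ card (S - std_orientation m q) * v (q, S))"

lemma orientation_sum_delta:
  assumes "is_orientation m q' S"
  shows "orientation_sum m (delta (q', S)) q = (if q = q' then (-1) ^ card (S - std_orientation m q) else 0)"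
proof -
  have "orientation_sum m (delta (q', S)) q
      = (\<Sum>S' | is_orientation m q S'. if S' = S \<and> q = q' then (-1) ^ card (S' - std_orientation m q) else 0)"
    unfolding orientation_sum_def by (rule sum.cong) (auto simp: delta_def)
  then show ?thesis using assms by (cases "q = q'") (simp_all add: finite_orientations)
qed

lemma orientation_sum_flip_span:
  assumes v: "v \<in> flip_span m"
  shows "orientation_sum m v q = 0"
proof -
  let ?T = "\<lambda>v q. orientation_sum m v q"
  have fs: "finite_supp (?T v)" if v: "finite_supp v" for v
  proof -
    have "q \<in> fst ` {i. v i \<noteq> 0}" if nz: "orientation_sum m v q \<noteq> 0" for q
    proof -
      obtain S where "(-1) ^ card (S - std_orientation m q) * v (q, S) \<noteq> 0"
        using nz unfolding orientation_sum_def by (rule sum.not_neutral_contains_not_neutral)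
      then show ?thesis by (intro image_eqI[of _ _ "(q, S)"]) auto
    qed
    then have "{q. orientation_sum m v q \<noteq> 0} \<subseteq> fst ` {i. v i \<noteq> 0}" by blast
    moreover have "finite (fst ` {i. v i \<noteq> 0})" using v unfolding finite_supp_def by simp
    ultimately show ?thesis unfolding finite_supp_def by (rule finite_subset)
  qed
  have "?T (\<lambda>j. v j + w j) = (\<lambda>q. ?T v q + ?T w q)" "?T (\<lambda>j. c * v j) = (\<lambda>q. c * ?T v q)" for v w c
    by (simp_all add: orientation_sum_def fun_eq_iff distrib_left distrib_right sum.distrib sum_distrib_left mult_ac)
  with fs have T: "linear_on_finite_supp ?T" unfolding linear_on_finite_supp_def by blast
  have W: "fun_vec.subspace {\<lambda>q. 0}" by (simp add: fun_vec.subspace_def fun_eq_iff zero_fun_def)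
  have "?T (\<lambda>j. delta (q', S) j + delta (q', flip_orientation q' S x) j) \<in> {\<lambda>q. 0}"
    if qS: "(q', S) \<in> oriented_pairings m" and x: "x < m" for q' S x
  proof -
    have q': "is_pairing m q'" and S: "is_orientation m q' S" using qS by auto
    have "(-1::real) ^ card (flip_orientation q' S x - std_orientation m q') = - ((-1) ^ card (S - std_orientation m q'))"
      by (rule sign_flip_orientation[OF q' S is_orientation_std[OF q'] x])
    then have "?T (\<lambda>j. delta (q', S) j + delta (q', flip_orientation q' S x) j) q = 0" for q
      by (simp add: linear_on_finite_supp_add[OF T] finite_supp_delta
          orientation_sum_delta[OF S] orientation_sum_delta[OF is_orientation_flip[OF q' S x]])
    then show ?thesis by auto
  qed
  from flip_span_image[OF T W this v] show ?thesis by (simp add: fun_eq_iff)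
qed

lemma flip_span_normalize:
  assumes q: "is_pairing m q" and S: "is_orientation m q S"
  shows "(\<lambda>j. delta (q, S) j - (-1) ^ card (S - std_orientation m q) * delta (q, std_orientation m q) j) \<in> flip_span m"
  using S
proof (induction "card (S - std_orientation m q)" arbitrary: S)
  case 0
  have std: "is_orientation m q (std_orientation m q)" by (rule is_orientation_std[OF q])
  then have "S = std_orientation m q"
    using 0 card_orientation_diff_commute[OF q std] finite_is_orientation[of m q] by (metis card_0_eq Diff_eq_empty_iff finite_Diff subset_antisym)
  then show ?case using fun_vec.subspace_0[OF subspace_flip_span] by (simp add: zero_fun_def)
next
  case (Suc k)
  have std: "is_orientation m q (std_orientation m q)" by (rule is_orientation_std[OF q])
  obtain x where x: "x \<in> S" "x \<notin> std_orientation m q" using Suc.hyps(2) by (metis Diff_iff card.empty ex_in_conv nat.distinct(1))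
  have xm: "x < m" using Suc.prems x unfolding is_orientation_def by auto
  have qx: "q x \<notin> S" "q x \<in> std_orientation m q" using Suc.prems std xm x unfolding is_orientation_def by blast+
  define S' where "S' = flip_orientation q S x"
  have S': "is_orientation m q S'" unfolding S'_def by (rule is_orientation_flip[OF q Suc.prems xm])
  have "S' - std_orientation m q = (S - std_orientation m q) - {x}"
    unfolding S'_def flip_orientation_def using x qx by auto
  then have "k = card (S' - std_orientation m q)" using Suc.hyps(2) x finite_is_orientation[OF Suc.prems] by simp
  from Suc.hyps(1)[OF this S']
  have "(\<lambda>j. delta (q, S') j - (-1) ^ card (S' - std_orientation m q) * delta (q, std_orientation m q) j) \<in> flip_span m" .
  moreover have "(\<lambda>j. delta (q, S) j + delta (q, S') j) \<in> flip_span m"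
    unfolding S'_def using q Suc.prems xm by (intro flip_relation_in_flip_span) simp_all
  moreover have "(-1::real) ^ card (S' - std_orientation m q) = - ((-1) ^ card (S - std_orientation m q))"
    unfolding S'_def by (rule sign_flip_orientation[OF q Suc.prems std xm])
  ultimately show ?case
    using subspace_diff_fun[OF subspace_flip_span] by (fastforce simp: algebra_simps)
qed

lemma sum_oriented_pairings:
  "(\<Sum>i\<in>oriented_pairings m. f i) = (\<Sum>q | is_pairing m q. \<Sum>S | is_orientation m q S. f (q, S))"
proof -
  have "oriented_pairings m = Sigma {q. is_pairing m q} (\<lambda>q. {S. is_orientation m q S})"
    unfolding oriented_pairings_def by auto
  then show ?thesis by (simp add: sum.Sigma finite_pairings finite_orientations)
qed

lemma flip_span_if_orientation_sums_vanish:
  assumes v: "v \<in> supported_on (oriented_pairings m)"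
    and sums: "\<And>q. is_pairing m q \<Longrightarrow> orientation_sum m v q = 0"
  shows "v \<in> flip_span m"
proof -
  define normalize where "normalize i =
    (\<lambda>j. delta i j - (-1) ^ card (snd i - std_orientation m (fst i)) * delta (fst i, std_orientation m (fst i)) j)" for i
  have "(\<lambda>j. \<Sum>i\<in>oriented_pairings m. v i * normalize i j) \<in> flip_span m"
    by (rule subspace_sum_fun[OF subspace_flip_span])
      (auto simp: normalize_def intro: flip_span_normalize)
  moreover have "(\<lambda>j. \<Sum>i\<in>oriented_pairings m. v i * normalize i j) = v"
  proof
    fix j
    \<comment> \<open>the subtracted part regroups into the vanishing orientation sums\<close>
    have "(\<Sum>i\<in>oriented_pairings m. v i * (-1) ^ card (snd i - std_orientation m (fst i))
          * delta (fst i, std_orientation m (fst i)) j)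
        = (\<Sum>q | is_pairing m q. orientation_sum m v q * delta (q, std_orientation m q) j)"
      unfolding sum_oriented_pairings orientation_sum_def
      by (simp add: sum_distrib_left sum_distrib_right mult_ac)
    also have "\<dots> = 0" using sums by simp
    finally show "(\<Sum>i\<in>oriented_pairings m. v i * normalize i j) = v j"
      using fun_cong[OF supported_on_expand[OF finite_oriented_pairings v], of j]
      by (simp add: normalize_def right_diff_distrib sum_subtractf mult.assoc)
  qed
  ultimately show ?thesis by simp
qed

text \<open>On orientation sums, which determine a block vector modulo flips, M_n acts by the matrix
  reduced_coeff; its diagonal entries dominate because q = p maximises the number of circles.\<close>

definition reduced_coeff :: "nat \<Rightarrow> nat \<Rightarrow> (nat \<Rightarrow> nat) \<Rightarrow> (nat \<Rightarrow> nat) \<Rightarrow> real" where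
  "reduced_coeff n m q p = circle_weight n m q p * (-1) ^ card (std_orientation m q - coherent_orientation m q p)
     * (-1) ^ card (({..<m} - coherent_orientation m q p) - std_orientation m p)"

lemma orientation_sum_block_coeff:
  assumes q: "is_pairing m q" and S: "is_orientation m q S" and p: "is_pairing m p"
  shows "(\<Sum>T | is_orientation m p T. (-1) ^ card (T - std_orientation m p) * block_coeff n m (q, S) (p, T))
       = reduced_coeff n m q p * (-1) ^ card (S - std_orientation m q)"
proof -
  let ?C = "coherent_orientation m q p"
  have std: "is_orientation m q (std_orientation m q)" by (rule is_orientation_std[OF q])
  have "(\<Sum>T | is_orientation m p T. (-1) ^ card (T - std_orientation m p) * block_coeff n m (q, S) (p, T))
      = (-1) ^ card (({..<m} - ?C) - std_orientation m p) * (circle_weight n m q p * (-1) ^ card (S - ?C))"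
    using is_orientation_coherent_complement[OF q p] finite_orientations
    by (simp add: block_coeff_def p if_distrib[of "\<lambda>t. _ * t"] sum.delta cong: if_cong)
  moreover have "(-1::real) ^ card (S - ?C) = (-1) ^ card (S - std_orientation m q) * (-1) ^ card (std_orientation m q - ?C)"
    using orientation_sign_mult[OF q std S is_orientation_coherent[OF q p]]
      card_orientation_diff_commute[OF q std S] by simp
  ultimately show ?thesis unfolding reduced_coeff_def by (simp add: mult_ac)
qed

lemma orientation_sum_block_op:
  assumes p: "is_pairing m p"
  shows "orientation_sum m (block_op n m v) p = (\<Sum>q | is_pairing m q. reduced_coeff n m q p * orientation_sum m v q)"
proof -
  have "orientation_sum m (block_op n m v) p
      = (\<Sum>i\<in>oriented_pairings m. v i * (\<Sum>T | is_orientation m p T. (-1) ^ card (T - std_orientation m p) * block_coeff n m i (p, T)))"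
    unfolding orientation_sum_def block_op_def
    by (simp add: sum_distrib_left sum.swap[of _ "{T. is_orientation m p T}"] mult_ac)
  also have "\<dots> = (\<Sum>q | is_pairing m q. \<Sum>S | is_orientation m q S. v (q, S) * (reduced_coeff n m q p * (-1) ^ card (S - std_orientation m q)))"
    unfolding sum_oriented_pairings by (simp add: orientation_sum_block_coeff p)
  also have "\<dots> = (\<Sum>q | is_pairing m q. reduced_coeff n m q p * orientation_sum m v q)"
    unfolding orientation_sum_def by (simp add: sum_distrib_left mult_ac)
  finally show ?thesis .
qed

lemma reduced_coeff_diagonally_dominant:
  assumes n: "card {q. is_pairing m q} < 2 * n" and p: "is_pairing m p"
  shows "(\<Sum>q\<in>{q. is_pairing m q} - {p}. \<bar>reduced_coeff n m q p\<bar>) < \<bar>reduced_coeff n m p p\<bar>"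
proof -
  let ?P = "{q. is_pairing m q}" and ?w = "circle_weight n m p p"
  have abs_eq: "\<bar>reduced_coeff n m q p\<bar> = circle_weight n m q p" for q
    unfolding reduced_coeff_def circle_weight_def by (simp add: abs_mult)
  have "circle_weight n m q p * (2 * real n) \<le> ?w" if "q \<in> ?P - {p}" for q
  proof -
    have "num_circles m q p < num_circles m p p" using num_circles_lt_diag[of m q p] that p by auto
    then have "num_circles m q p + 1 \<le> num_circles m p p" by simp
    then have "(2 * real n) ^ (num_circles m q p + 1) \<le> (2 * real n) ^ num_circles m p p"
      by (rule power_increasing) (use n in simp)
    then show ?thesis unfolding circle_weight_def by (simp add: mult.commute)
  qed
  then have "(\<Sum>q\<in>?P - {p}. circle_weight n m q p) * (2 * real n) \<le> real (card (?P - {p})) * ?w"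
    using sum_bounded_above[of "?P - {p}" "\<lambda>q. circle_weight n m q p * (2 * real n)" ?w]
    by (simp add: sum_distrib_right)
  also have "\<dots> < (2 * real n) * ?w"
    using n p finite_pairings[of m] by (intro mult_strict_right_mono) (auto simp: circle_weight_def)
  finally show ?thesis unfolding abs_eq using n by (simp add: mult.commute)
qed

lemma block_op_injective_mod_flip_span:
  assumes n: "card {q. is_pairing m q} < 2 * n" and v: "v \<in> supported_on (oriented_pairings m)"
    and Bv: "block_op n m v \<in> flip_span m"
  shows "v \<in> flip_span m"
proof (rule flip_span_if_orientation_sums_vanish[OF v])
  fix q assume q: "is_pairing m q"
  have "(\<Sum>q | is_pairing m q. reduced_coeff n m q p * orientation_sum m v q) = 0" if "is_pairing m p" for p
    using orientation_sum_block_op[OF that, of n v] orientation_sum_flip_span[OF Bv, of p] by simp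
  then show "orientation_sum m v q = 0"
    using diagonally_dominant_kernel_trivial[OF finite_pairings reduced_coeff_diagonally_dominant[OF n]] q
    by simp
qed

lemma exists_block_op_inverse_mod_flip_span:
  assumes "card {q. is_pairing m q} < 2 * n"
  shows "\<exists>r e. \<forall>v\<in>supported_on (oriented_pairings m).
    (\<lambda>x. block_op n m (poly_op r e (block_op n m) v) x - v x) \<in> flip_span m"
  using exists_poly_right_inverse_mod_subspace[OF linear_on_finite_supp_block_op finite_oriented_pairings
      block_op_supported subspace_flip_span block_op_injective_mod_flip_span[OF assms]] by blast

section \<open>M_n preserves the relations\<close>

lemma relabel_relation_og_rel:
  "valid_ograph Op k m g \<Longrightarrow> v < k \<Longrightarrow> p permutes {..<valence m g v} \<Longrightarrow>
    (\<lambda>s. delta g s - delta (relabel_spider act m g v p) s) \<in> og_rel Op act k m"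
  unfolding og_rel_eq_span og_relations_def by (rule fun_vec.span_base, rule UnI1, rule UnI2) blast

lemma set_color_relation_og_rel:
  "valid_ograph Op k m g \<Longrightarrow> v < k \<Longrightarrow> a \<in> Op (valence m g v - 1) \<Longrightarrow> b \<in> Op (valence m g v - 1) \<Longrightarrow>
    (\<lambda>s. delta (set_color g v (c *\<^sub>R a + d *\<^sub>R b)) s - c * delta (set_color g v a) s
       - d * delta (set_color g v b) s) \<in> og_rel Op act k m"
  unfolding og_rel_eq_span og_relations_def by (rule fun_vec.span_base, rule UnI2) blast

lemma transport_relation_og_rel:
  "valid_ograph Op k m g \<Longrightarrow> t permutes {..<m} \<Longrightarrow> r permutes {..<k} \<Longrightarrow>
    (\<lambda>s. delta g s - real_of_int (sign r) * delta (transport k m t r g) s) \<in> og_rel Op act k m"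
  unfolding og_rel_eq_span og_relations_def by (rule fun_vec.span_base, rule UnI1, rule UnI1, rule UnI2) blast

lemma M_gen_map_regluing:
  assumes "gpair h = gpair g" "gst h = gst g" "\<And>p. regluing m h p = \<Phi> (regluing m g p)"
  shows "M_gen n m h = (\<lambda>s. \<Sum>p | is_pairing m p.
    (2 * real n) ^ num_circles m (gpair g) p * regluing_sign m g p * delta (\<Phi> (regluing m g p)) s)"
  using assms unfolding M_gen_def regluing_sign_def coherent_dirs_eq by simp

lemma M_op_relabel_relation:
  assumes g: "valid_ograph Op k m g" and v: "v < k" and p: "p permutes {..<valence m g v}"
  shows "M_op n m (\<lambda>s. delta g s - delta (relabel_spider act m g v p) s) \<in> og_rel Op act k m"
proof -
  let ?h = "relabel_spider act m g v p"
  have "regluing m ?h p' = relabel_spider act m (regluing m g p') v p" for p'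
    unfolding regluing_def relabel_spider_def coherent_dirs_eq ograph.sel valence_def ..
  then have "M_gen n m ?h = (\<lambda>s. \<Sum>p' | is_pairing m p'. (2 * real n) ^ num_circles m (gpair g) p'
      * regluing_sign m g p' * delta (relabel_spider act m (regluing m g p') v p) s)"
    by (intro M_gen_map_regluing) (simp_all add: relabel_spider_def)
  then have "M_op n m (\<lambda>s. delta g s - delta ?h s) = (\<lambda>s. \<Sum>p' | is_pairing m p'.
      ((2 * real n) ^ num_circles m (gpair g) p' * regluing_sign m g p')
      * (delta (regluing m g p') s - delta (relabel_spider act m (regluing m g p') v p) s))"
    by (simp add: linear_on_finite_supp_diff[OF linear_on_finite_supp_M_op] finite_supp_delta M_op_delta
        fun_eq_iff right_diff_distrib sum_subtractf M_gen_def)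
  also have "\<dots> \<in> og_rel Op act k m"
  proof (rule subspace_sum_fun[OF subspace_og_rel])
    fix p' assume "p' \<in> {p'. is_pairing m p'}"
    then have "valid_ograph Op k m (regluing m g p')" by (simp add: valid_regluing[OF g])
    moreover have "valence m (regluing m g p') v = valence m g v" unfolding valence_def regluing_def by simp
    ultimately show "(\<lambda>s. delta (regluing m g p') s - delta (relabel_spider act m (regluing m g p') v p) s)
        \<in> og_rel Op act k m"
      using v p by (intro relabel_relation_og_rel) simp_all
  qed
  finally show ?thesis .
qed

lemma M_op_set_color_relation:
  assumes g: "valid_ograph Op k m g" and v: "v < k"
    and a: "a \<in> Op (valence m g v - 1)" and b: "b \<in> Op (valence m g v - 1)"
  shows "M_op n m (\<lambda>s. delta (set_color g v (c *\<^sub>R a + d *\<^sub>R b)) s - c * delta (set_color g v a) s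
           - d * delta (set_color g v b) s) \<in> og_rel Op act k m"
proof -
  have M_gen_set_color: "M_gen n m (set_color g v w) = (\<lambda>s. \<Sum>p | is_pairing m p. (2 * real n) ^ num_circles m (gpair g) p
      * regluing_sign m g p * delta (set_color (regluing m g p) v w) s)" for w
    by (rule M_gen_map_regluing) (simp_all add: set_color_def regluing_def coherent_dirs_eq)
  have M_op_comb: "M_op n m (\<lambda>s. delta X s - c * delta Y s - d * delta Z s)
      = (\<lambda>s. M_gen n m X s - c * M_gen n m Y s - d * M_gen n m Z s)" for X Y Z
  proof -
    note L = linear_on_finite_supp_M_op
    have "finite_supp (\<lambda>s. c * delta Y s)" "finite_supp (\<lambda>s. d * delta Z s)"
      "finite_supp (\<lambda>s. delta X s - c * delta Y s)"
      by (intro finite_supp_diff finite_supp_scale finite_supp_delta)+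
    then show ?thesis
      by (simp add: linear_on_finite_supp_diff[OF L] linear_on_finite_supp_scale[OF L] finite_supp_delta M_op_delta)
  qed
  have "M_op n m (\<lambda>s. delta (set_color g v (c *\<^sub>R a + d *\<^sub>R b)) s - c * delta (set_color g v a) s
      - d * delta (set_color g v b) s) = (\<lambda>s. \<Sum>p | is_pairing m p.
        ((2 * real n) ^ num_circles m (gpair g) p * regluing_sign m g p)
        * (delta (set_color (regluing m g p) v (c *\<^sub>R a + d *\<^sub>R b)) s
           - c * delta (set_color (regluing m g p) v a) s - d * delta (set_color (regluing m g p) v b) s))"
    unfolding M_op_comb M_gen_set_color
    by (simp add: fun_eq_iff right_diff_distrib sum_subtractf sum_distrib_left mult_ac)
  also have "\<dots> \<in> og_rel Op act k m"
  proof (rule subspace_sum_fun[OF subspace_og_rel])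
    fix p assume "p \<in> {p. is_pairing m p}"
    then have "valid_ograph Op k m (regluing m g p)" by (simp add: valid_regluing[OF g])
    moreover have "valence m (regluing m g p) v = valence m g v" unfolding valence_def regluing_def by simp
    ultimately show "(\<lambda>s. delta (set_color (regluing m g p) v (c *\<^sub>R a + d *\<^sub>R b)) s
        - c * delta (set_color (regluing m g p) v a) s - d * delta (set_color (regluing m g p) v b) s)
        \<in> og_rel Op act k m"
      using v a b by (intro set_color_relation_og_rel) simp_all
  qed
  finally show ?thesis .
qed

lemma M_op_flip_relation:
  assumes g: "valid_ograph Op k m g" and x: "x < m"
  shows "M_op n m (\<lambda>s. delta g s + delta (flip_edge g x) s) = (\<lambda>s. 0)"
proof -
  have qS: "(gpair g, gst g) \<in> oriented_pairings m" by (rule oriented_pairings_valid[OF g])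
  then have q: "is_pairing m (gpair g)" and S: "is_orientation m (gpair g) (gst g)" by auto
  let ?C = "coherent_orientation m (gpair g)"
  have "flip_edge g x = with_edges g (gpair g, flip_orientation (gpair g) (gst g) x)"
    using flip_edge_with_edges[of g "gpair g" "gst g" x] by (simp add: with_edges_self)
  then have "M_gen n m (flip_edge g x) = (\<lambda>s. \<Sum>p | is_pairing m p. - (circle_weight n m (gpair g) p
      * (-1) ^ card (gst g - ?C p) * delta (with_edges g (p, {..<m} - ?C p)) s))"
    using sign_flip_orientation[OF q S is_orientation_coherent[OF q] x]
    by (simp add: M_gen_with_edges with_edges_with_edges)
  also have "\<dots> = (\<lambda>s. - M_gen n m g s)"
    using M_gen_with_edges[of n m g "gpair g" "gst g"] by (simp add: with_edges_self sum_negf)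
  finally have "M_gen n m (flip_edge g x) = (\<lambda>s. - M_gen n m g s)" .
  then show ?thesis
    by (simp add: linear_on_finite_supp_add[OF linear_on_finite_supp_M_op] finite_supp_delta M_op_delta)
qed

lemma normalize_og_rel:
  assumes g: "valid_ograph Op k m g" and p: "is_pairing m p" and T: "is_orientation m p T"
  shows "(\<lambda>s. delta (with_edges g (p, T)) s - (-1) ^ card (T - std_orientation m p)
    * delta (with_edges g (p, std_orientation m p)) s) \<in> og_rel Op act k m"
proof -
  have "(p, T) \<in> oriented_pairings m" "(p, std_orientation m p) \<in> oriented_pairings m"
    using p T is_orientation_std[OF p] by simp_all
  then have "lift m g (\<lambda>j. delta (p, T) j - (-1) ^ card (T - std_orientation m p) * delta (p, std_orientation m p) j)
    = (\<lambda>s. delta (with_edges g (p, T)) s - (-1) ^ card (T - std_orientation m p) * delta (with_edges g (p, std_orientation m p)) s)"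
    by (simp add: linear_on_finite_supp_diff[OF linear_on_finite_supp_lift]
        linear_on_finite_supp_scale[OF linear_on_finite_supp_lift] finite_supp_scale finite_supp_delta lift_delta)
  then show ?thesis using lift_flip_span[OF g flip_span_normalize[OF p T]] by simp
qed

lemma transport_with_edges:
  "transport k m t r (with_edges g (p, X)) = with_edges (transport k m t r g) (conj_pairing t p, t ` X)"
  unfolding transport_def with_edges_def conj_pairing_def ograph.sel fst_conv snd_conv ..

lemma is_orientation_conj_inv_image:
  assumes t: "t permutes {..<m}" and Z: "is_orientation m (conj_pairing t q) Z"
  shows "is_orientation m q (inv t ` Z)"
  unfolding is_orientation_def
proof (intro conjI allI impI)
  show "inv t ` Z \<subseteq> {..<m}"
    using is_orientation_subset[OF Z] permutes_in_image[OF permutes_inv[OF t]] by auto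
next
  fix x assume x: "x < m"
  have mem: "y \<in> inv t ` Z \<longleftrightarrow> t y \<in> Z" for y
  proof
    assume "t y \<in> Z"
    then show "y \<in> inv t ` Z" using image_eqI[of y "inv t" "t y" Z] permutes_inverses(2)[OF t] by simp
  qed (use permutes_inverses(1)[OF t] in auto)
  have "t x \<in> Z \<longleftrightarrow> conj_pairing t q (t x) \<notin> Z"
    using Z permutes_in_image[OF t] x unfolding is_orientation_def by blast
  then show "x \<in> inv t ` Z \<longleftrightarrow> q x \<notin> inv t ` Z" unfolding mem conj_pairing_apply[OF t] .
qed

lemma coherent_sign_change:
  assumes q: "is_pairing m q" and p: "is_pairing m p" and S: "is_orientation m q S"
    and C: "is_orientation m q C" "is_orientation m p ({..<m} - C)"
    and Y: "is_orientation m q Y" "is_orientation m p ({..<m} - Y)"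
  shows "(-1::real) ^ card (S - C) * (-1) ^ card (({..<m} - C) - std_orientation m p)
    = (-1) ^ card (S - Y) * (-1) ^ card (({..<m} - Y) - std_orientation m p)"
proof -
  have std: "is_orientation m p (std_orientation m p)" by (rule is_orientation_std[OF p])
  define a b c d :: real where "a = (-1) ^ card (S - C)" and "b = (-1) ^ card (S - Y)"
    and "c = (-1) ^ card (({..<m} - C) - std_orientation m p)"
    and "d = (-1) ^ card (({..<m} - Y) - std_orientation m p)"
  have "({..<m} - C) - ({..<m} - Y) = Y - C" using is_orientation_subset[OF Y(1)] by blast
  then have "a * b = c * d"
    using orientation_sign_mult[OF q S C(1) Y(1)] orientation_sign_mult[OF p std C(2) Y(2)]
      card_orientation_diff_commute[OF p std C(2)] card_orientation_diff_commute[OF p std Y(2)]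
      card_orientation_diff_commute[OF q Y(1) C(1)]
    unfolding a_def b_def c_def d_def by simp
  moreover have "b * b = 1" "c * c = 1" unfolding b_def c_def by (simp_all add: power_mult_distrib[symmetric])
  ultimately have "a * c = b * d" by (metis mult.assoc mult.commute mult.left_neutral)
  then show ?thesis unfolding a_def b_def c_def d_def .
qed

lemma M_gen_transport:
  fixes Y :: "(nat \<Rightarrow> nat) \<Rightarrow> nat set"
  assumes t: "t permutes {..<m}" and q: "is_pairing m (gpair g)"
    and Y_def: "\<And>p. Y p = inv t ` coherent_orientation m (conj_pairing t (gpair g)) (conj_pairing t p)"
  shows "M_gen n m (transport k m t r g) = (\<lambda>s. \<Sum>p | is_pairing m p. circle_weight n m (gpair g) p
    * (-1) ^ card (gst g - Y p) * delta (transport k m t r (with_edges g (p, {..<m} - Y p))) s)"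
proof
  fix s
  let ?q = "gpair g" and ?S = "gst g" and ?tg = "transport k m t r g"
  define C' where "C' p = coherent_orientation m (conj_pairing t ?q) (conj_pairing t p)" for p
  have tY: "t ` Y p = C' p" for p
    unfolding Y_def C'_def image_image using permutes_inverses(1)[OF t] by simp
  have "t ` ({..<m} - Y p) = {..<m} - C' p" for p
    using tY permutes_image[OF t] permutes_inj[OF t] by (simp add: image_set_diff)
  then have transport_eq: "transport k m t r (with_edges g (p, {..<m} - Y p)) = with_edges ?tg (conj_pairing t p, {..<m} - C' p)" for p
    unfolding transport_with_edges by simp
  have card_eq: "card (t ` ?S - C' p) = card (?S - Y p)" for p
  proof -
    have "t ` ?S - C' p = t ` (?S - Y p)"
      unfolding tY[symmetric] using permutes_inj[OF t] by (simp add: image_set_diff)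
    then show ?thesis using card_image[OF inj_on_subset[OF permutes_inj[OF t]]] by simp
  qed
  have tg: "?tg = with_edges ?tg (conj_pairing t ?q, t ` ?S)"
    using with_edges_self[of ?tg] by (simp add: transport_def conj_pairing_def)
  have "M_gen n m ?tg s = (\<Sum>p' | is_pairing m p'. circle_weight n m (conj_pairing t ?q) p'
      * (-1) ^ card (t ` ?S - coherent_orientation m (conj_pairing t ?q) p')
      * delta (with_edges ?tg (p', {..<m} - coherent_orientation m (conj_pairing t ?q) p')) s)"
    by (subst tg) (simp only: M_gen_with_edges with_edges_with_edges)
  also have "\<dots> = (\<Sum>p | is_pairing m p. circle_weight n m (conj_pairing t ?q) (conj_pairing t p)
      * (-1) ^ card (t ` ?S - C' p) * delta (with_edges ?tg (conj_pairing t p, {..<m} - C' p)) s)"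
    unfolding C'_def by (rule sum.reindex_bij_betw[OF bij_betw_conj_pairing[OF t], symmetric])
  also have "\<dots> = (\<Sum>p | is_pairing m p. circle_weight n m ?q p
      * (-1) ^ card (?S - Y p) * delta (transport k m t r (with_edges g (p, {..<m} - Y p))) s)"
    using num_circles_conj[OF t] by (simp add: circle_weight_def card_eq transport_eq)
  finally show "M_gen n m ?tg s = (\<Sum>p | is_pairing m p. circle_weight n m ?q p
      * (-1) ^ card (?S - Y p) * delta (transport k m t r (with_edges g (p, {..<m} - Y p))) s)" .
qed

lemma transported_regluing_og_rel:
  assumes g: "valid_ograph Op k m g" and t: "t permutes {..<m}" and r: "r permutes {..<k}"
    and p: "is_pairing m p"
    and C: "is_orientation m (gpair g) C" "is_orientation m p ({..<m} - C)"
    and Y: "is_orientation m (gpair g) Y" "is_orientation m p ({..<m} - Y)"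
  shows "(\<lambda>s. (-1) ^ card (gst g - C) * delta (with_edges g (p, {..<m} - C)) s
    - real_of_int (sign r) * ((-1) ^ card (gst g - Y) * delta (transport k m t r (with_edges g (p, {..<m} - Y))) s))
    \<in> og_rel Op act k m"
proof -
  let ?std = "std_orientation m p" and ?g = "\<lambda>T. with_edges g (p, T)"
  have q: "is_pairing m (gpair g)" and S: "is_orientation m (gpair g) (gst g)"
    using oriented_pairings_valid[OF g] by auto
  \<comment> \<open>both graphs reduce, modulo relations, to multiples of the one with the standard orientation\<close>
  define N where "N T = (\<lambda>s. delta (?g T) s - (-1) ^ card (T - ?std) * delta (?g ?std) s)" for T
  define R where "R = (\<lambda>s. delta (?g ({..<m} - Y)) s
    - real_of_int (sign r) * delta (transport k m t r (?g ({..<m} - Y))) s)"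
  have "N ({..<m} - C) \<in> og_rel Op act k m" "N ({..<m} - Y) \<in> og_rel Op act k m"
    unfolding N_def using normalize_og_rel[OF g p] C(2) Y(2) by blast+
  moreover have "R \<in> og_rel Op act k m"
    unfolding R_def using valid_with_edges[OF g] p Y(2) by (intro transport_relation_og_rel t r) simp_all
  ultimately have W: "(\<lambda>s. (-1) ^ card (gst g - C) * N ({..<m} - C) s - (-1) ^ card (gst g - Y) * N ({..<m} - Y) s
      + (-1) ^ card (gst g - Y) * R s) \<in> og_rel Op act k m"
    by (intro subspace_add_fun[OF subspace_og_rel] subspace_diff_fun[OF subspace_og_rel]
        fun_vec.subspace_scale[OF subspace_og_rel])
  have key: "(-1::real) ^ card (gst g - C) * (-1) ^ card (({..<m} - C) - ?std)
      = (-1) ^ card (gst g - Y) * (-1) ^ card (({..<m} - Y) - ?std)"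
    by (rule coherent_sign_change[OF q p S C Y])
  have "(-1) ^ card (gst g - C) * N ({..<m} - C) s - (-1) ^ card (gst g - Y) * N ({..<m} - Y) s
      + (-1) ^ card (gst g - Y) * R s
    = (-1) ^ card (gst g - C) * delta (?g ({..<m} - C)) s
      - ((-1) ^ card (gst g - C) * (-1) ^ card (({..<m} - C) - ?std)) * delta (?g ?std) s
      + ((-1) ^ card (gst g - Y) * (-1) ^ card (({..<m} - Y) - ?std)) * delta (?g ?std) s
      - real_of_int (sign r) * ((-1) ^ card (gst g - Y) * delta (transport k m t r (?g ({..<m} - Y))) s)" for s
    unfolding N_def R_def by (simp add: algebra_simps)
  with W show ?thesis unfolding key by simp
qed

lemma M_op_transport_relation:
  assumes g: "valid_ograph Op k m g" and t: "t permutes {..<m}" and r: "r permutes {..<k}"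
  shows "M_op n m (\<lambda>s. delta g s - real_of_int (sign r) * delta (transport k m t r g) s) \<in> og_rel Op act k m"
proof -
  let ?q = "gpair g" and ?S = "gst g" and ?sr = "real_of_int (sign r)"
  have q: "is_pairing m ?q" using oriented_pairings_valid[OF g] by simp
  define C where "C p = coherent_orientation m ?q p" for p
  define Y where "Y p = inv t ` coherent_orientation m (conj_pairing t ?q) (conj_pairing t p)" for p
  have Y: "is_orientation m ?q (Y p)" "is_orientation m p ({..<m} - Y p)" if p: "is_pairing m p" for p
  proof -
    have tp: "is_pairing m (conj_pairing t ?q)" "is_pairing m (conj_pairing t p)"
      using is_pairing_conj[OF t] q p by simp_all
    have "inv t ` ({..<m} - Z) = {..<m} - inv t ` Z" for Z
      using permutes_image[OF permutes_inv[OF t]] permutes_inj[OF permutes_inv[OF t]] by (simp add: image_set_diff)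
    then show "is_orientation m ?q (Y p)" "is_orientation m p ({..<m} - Y p)"
      unfolding Y_def using is_orientation_conj_inv_image[OF t] is_orientation_coherent[OF tp]
        is_orientation_coherent_complement[OF tp] by metis+
  qed
  have "M_op n m (\<lambda>s. delta g s - ?sr * delta (transport k m t r g) s)
      = (\<lambda>s. M_gen n m g s - ?sr * M_gen n m (transport k m t r g) s)"
    by (simp add: linear_on_finite_supp_diff[OF linear_on_finite_supp_M_op]
        linear_on_finite_supp_scale[OF linear_on_finite_supp_M_op] finite_supp_scale finite_supp_delta M_op_delta)
  also have "\<dots> = (\<lambda>s. \<Sum>p | is_pairing m p. circle_weight n m ?q p
      * ((-1) ^ card (?S - C p) * delta (with_edges g (p, {..<m} - C p)) s
         - ?sr * ((-1) ^ card (?S - Y p) * delta (transport k m t r (with_edges g (p, {..<m} - Y p))) s)))"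
    using M_gen_with_edges[of n m g ?q ?S] M_gen_transport[OF t q Y_def]
    by (simp add: with_edges_self C_def fun_eq_iff sum_subtractf sum_distrib_left right_diff_distrib mult_ac)
  also have "\<dots> \<in> og_rel Op act k m"
    using transported_regluing_og_rel[OF g t r _ is_orientation_coherent[OF q] is_orientation_coherent_complement[OF q] Y]
    unfolding C_def by (intro subspace_sum_fun[OF subspace_og_rel]) simp
  finally show ?thesis .
qed

lemma subspace_free_og: "fun_vec.subspace (free_og Op k m)"
proof -
  have "free_og Op k m = {f. finite_supp f} \<inter> supported_on {g. valid_ograph Op k m g}"
    unfolding free_og_def finite_supp_def supported_on_def by blast
  then show ?thesis using fun_vec.subspace_inter subspace_finite_supp subspace_supported_on by metis
qed

lemma free_og_finite_supp: "f \<in> free_og Op k m \<Longrightarrow> finite_supp f"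
  unfolding free_og_def finite_supp_def by blast

lemma M_gen_free_og:
  assumes g: "valid_ograph Op k m g"
  shows "M_gen n m g \<in> free_og Op k m"
  unfolding M_gen_def
proof (rule subspace_sum_fun[OF subspace_free_og])
  fix p assume "p \<in> {p. is_pairing m p}"
  then have "valid_ograph Op k m (regluing m g p)" by (simp add: valid_regluing[OF g])
  then show "delta (regluing m g p) \<in> free_og Op k m"
    unfolding free_og_def using finite_supp_delta[unfolded finite_supp_def] by (auto simp: delta_def)
qed

lemma M_op_free_og:
  assumes f: "f \<in> free_og Op k m"
  shows "M_op n m f \<in> free_og Op k m"
proof -
  have "valid_ograph Op k m g" if "f g \<noteq> 0" for g using f that unfolding free_og_def by blast
  then show ?thesis unfolding M_op_def by (intro subspace_sum_fun[OF subspace_free_og] M_gen_free_og) simp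
qed

lemma M_op_og_rel: "f \<in> og_rel Op act k m \<Longrightarrow> M_op n m f \<in> og_rel Op act k m"
proof (rule conjunct2[OF linear_on_finite_supp_span[OF linear_on_finite_supp_M_op subspace_og_rel]])
  show "f \<in> fun_vec.span (og_relations Op act k m)" if "f \<in> og_rel Op act k m" using that unfolding og_rel_eq_span .
  fix r assume "r \<in> og_relations Op act k m"
  then consider
      (flip) g x where "r = (\<lambda>s. delta g s + delta (flip_edge g x) s)" "valid_ograph Op k m g" "x < m"
    | (transport) g t \<rho> where "r = (\<lambda>s. delta g s - real_of_int (sign \<rho>) * delta (transport k m t \<rho> g) s)"
        "valid_ograph Op k m g" "t permutes {..<m}" "\<rho> permutes {..<k}"
    | (relabel) g v p where "r = (\<lambda>s. delta g s - delta (relabel_spider act m g v p) s)"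
        "valid_ograph Op k m g" "v < k" "p permutes {..<valence m g v}"
    | (set_color) g v a b c d where "r = (\<lambda>s. delta (set_color g v (c *\<^sub>R a + d *\<^sub>R b)) s
          - c * delta (set_color g v a) s - d * delta (set_color g v b) s)"
        "valid_ograph Op k m g" "v < k" "a \<in> Op (valence m g v - 1)" "b \<in> Op (valence m g v - 1)"
    unfolding og_relations_def by blast
  then show "finite_supp r \<and> M_op n m r \<in> og_rel Op act k m"
  proof cases
    case flip
    then show ?thesis
      using fun_vec.subspace_0[OF subspace_og_rel]
      by (simp add: M_op_flip_relation finite_supp_delta subspace_add_fun[OF subspace_finite_supp, simplified]
          zero_fun_def)
  next
    case transport
    then show ?thesis
      by (simp add: M_op_transport_relation finite_supp_diff finite_supp_scale finite_supp_delta)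
  next
    case relabel
    then show ?thesis by (simp add: M_op_relabel_relation finite_supp_diff finite_supp_delta)
  next
    case set_color
    then show ?thesis
      by (simp add: M_op_set_color_relation finite_supp_diff finite_supp_scale finite_supp_delta)
  qed
qed

lemma M_op_poly_right_inverse_mod_og_rel:
  assumes block_inv: "\<And>v. v \<in> supported_on (oriented_pairings m) \<Longrightarrow>
      (\<lambda>x. block_op n m (poly_op r e (block_op n m) v) x - v x) \<in> flip_span m"
    and f: "f \<in> free_og Op k m"
  shows "(\<lambda>s. M_op n m (poly_op r e (M_op n m) f) s - f s) \<in> og_rel Op act k m"
proof -
  let ?L = "M_op n m" and ?B = "block_op n m"
  let ?LR = "\<lambda>f. ?L (poly_op r e ?L f)"
  have delta_inv: "(\<lambda>s. ?LR (delta g) s - delta g s) \<in> og_rel Op act k m" if g: "valid_ograph Op k m g" for g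
  proof -
    let ?i = "(gpair g, gst g)"
    have i: "?i \<in> oriented_pairings m" by (rule oriented_pairings_valid[OF g])
    then have "delta g = lift m g (delta ?i)" by (simp add: lift_delta with_edges_self)
    then have "(\<lambda>s. ?LR (delta g) s - delta g s) = lift m g (\<lambda>x. ?B (poly_op r e ?B (delta ?i)) x - delta ?i x)"
      by (simp add: poly_op_M_op_lift M_op_lift lift_diff)
    then show ?thesis using lift_flip_span[OF g block_inv[OF delta_supported_on[OF i]]] by simp
  qed
  have e: "f = (\<lambda>s. \<Sum>g | f g \<noteq> 0. f g * delta g s)"
    by (rule finite_supp_expand[OF free_og_finite_supp[OF f]])
  have "?LR f = ?LR (\<lambda>s. \<Sum>g | f g \<noteq> 0. f g * delta g s)"
    by (rule arg_cong[OF e])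
  also have "\<dots> = (\<lambda>s. \<Sum>g | f g \<noteq> 0. f g * ?LR (delta g) s)"
    by (rule linear_on_finite_supp_sum[OF linear_on_finite_supp_comp[OF linear_on_finite_supp_M_op
          linear_on_finite_supp_poly_op[OF linear_on_finite_supp_M_op]] finite_supp_delta])
  finally have LRf: "?LR f = (\<lambda>s. \<Sum>g | f g \<noteq> 0. f g * ?LR (delta g) s)" .
  have "(\<lambda>s. ?LR f s - f s) = (\<lambda>s. \<Sum>g | f g \<noteq> 0. f g * (?LR (delta g) s - delta g s))"
  proof
    fix s
    have fs: "f s = (\<Sum>g | f g \<noteq> 0. f g * delta g s)" using fun_cong[OF e, of s] .
    show "?LR f s - f s = (\<Sum>g | f g \<noteq> 0. f g * (?LR (delta g) s - delta g s))"
      unfolding LRf by (subst fs) (simp add: right_diff_distrib sum_subtractf)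
  qed
  moreover have "valid_ograph Op k m g" if "f g \<noteq> 0" for g using f that unfolding free_og_def by blast
  ultimately show ?thesis using delta_inv by (auto intro: subspace_sum_fun[OF subspace_og_rel])
qed

theorem proposition2p22:
  fixes Op :: "nat \<Rightarrow> 'a::real_vector set"
    and e :: 'a
    and ocomp :: "nat \<Rightarrow> nat \<Rightarrow> nat \<Rightarrow> 'a \<Rightarrow> 'a \<Rightarrow> 'a"
    and act :: "nat \<Rightarrow> (nat \<Rightarrow> nat) \<Rightarrow> 'a \<Rightarrow> 'a"
    and k m :: nat
  assumes "cyclic_operad Op e ocomp act"
    and "finite_dim_operad Op"
  shows "\<exists>N. \<forall>n\<ge>N. induces_iso_on_quotient (free_og Op k m) (og_rel Op act k m) (M_op n m)"
proof (intro exI allI impI)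
  fix n assume "Suc (card {q. is_pairing m q}) \<le> n"
  then have "card {q. is_pairing m q} < 2 * n" by simp
  then obtain r e where "\<forall>v\<in>supported_on (oriented_pairings m).
      (\<lambda>x. block_op n m (poly_op r e (block_op n m) v) x - v x) \<in> flip_span m"
    using exists_block_op_inverse_mod_flip_span by blast
  then have block_inv: "\<And>v. v \<in> supported_on (oriented_pairings m) \<Longrightarrow>
      (\<lambda>x. block_op n m (poly_op r e (block_op n m) v) x - v x) \<in> flip_span m" by blast
  show "induces_iso_on_quotient (free_og Op k m) (og_rel Op act k m) (M_op n m)"
    by (rule induces_iso_on_quotient_if_poly_right_inverse[OF linear_on_finite_supp_M_op subspace_free_og _
          subspace_og_rel M_op_free_og M_op_og_rel M_op_poly_right_inverse_mod_og_rel[OF block_inv]])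
      (auto intro: free_og_finite_supp)
qed

end
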